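(* Assume the symmetric interference model with types with type partition $\Pi$ whose parts have sizes divisible by $r$, fix $K>0$, let $\mathcal P$ be any partition of $V(G)$ into sets of size $r$ each contained in a single part of $\Pi$, and let $T=T_{\vec B,\mathcal P}$. Then $$\sqrt{\mathbb E_{\vec B}\Big[\Big(\sum_{\pi\in\Pi}\|D^\pi_T\|_{W,\pi}\Big)^2\Big]}\le\frac1{rn}\sum_{v\in V(G)}\frac{4K}{\sqrt{d(v)}}+\frac K{pqn}\sum_{v\in V(G)}\frac{|\mathcal P_v\cap\mathcal N(v)|}{d(v)}.$$ If moreover $|f_\pi(u)-f_\pi(u')|\le \mathbf d(u,u')$ for all $\pi\in\Pi$ and $u,u'\in\mathcal B_\pi$, then $\sqrt{\mathbb E_{\vec B}\xi^2}$ is bounded by the same right-hand side.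
   Context: Let $n,p,q$ be positive integers, $r=p+q$, $G$ a finite simple graph with $|V(G)|=rn$, no isolated vertices; $\mathcal N(v)$, $d(v)$ neighbor set and degree. For each $v$, $x_v,t_v\in\mathbb R$ and $f_v:2^{\mathcal N(v)}\to\mathbb R$, $f_v(\emptyset)=0$. $\sigma_T(v)=q$ if $v\in T$, $-p$ otherwise; for $|T|=pn$, $\xi=\frac1{pqn}\sum_v\sigma_T(v)f_v(T\cap\mathcal N(v))$. Symmetric interference model with types: $\Pi$ partition of $V(G)$, $\Pi(v)$ the part containing $v$, $\mathcal B_\pi=\{(a,b)\in\mathbb Z^2_{\ge0}:a+b=d(v)\text{ for some }v\in\pi\}$, $f_\pi:\mathcal B_\pi\to\mathbb R$, $f_v(S)=f_{\Pi(v)}(|S|,|\mathcal N(v)\setminus S|)$. Restricted randomization: for $\mathcal P=(S_1,\dots,S_n)$, $S_i=\{w_i^1,\dots,w_i^r\}$, $B_i$ i.i.d. uniform $p$-subsets of $\{1,\dots,r\}$, $T_{\vec B,\mathcal P}=\{w_i^j:j\in B_i\}$; $\mathcal P_v$ is the block containing $v$. $\vec d_T(v)=(|T\cap\mathcal N(v)|,|\mathcal N(v)\setminus T|)$; for $\pi$ with $|T\cap\pi|=p|\pi|/r$, $D^\pi_T=\frac1{pqn}\sum_{v\in\pi}\sigma_T(v)\delta_{\vec d_T(v)}$, a signed measure on $\mathcal B_\pi$ of total mass 0. On $\mathcal B_\pi$ use $\mathbf d((a,b),(c,d))=K\left|\frac a{a+b}-\frac c{c+d}\right|$, and $\|D\|_{W,\pi}=\sup\{|\sum_{u}g(u)D(u)|:g:\mathcal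 B_\pi\to\mathbb R,\ |g(u)-g(u')|\le\mathbf d(u,u')\ \forall u,u'\}$. *)

theory Defs
  imports "HOL-Analysis.Analysis" "HOL-Library.Disjoint_Sets"
begin

definition nbr :: "'v set \<Rightarrow> ('v \<Rightarrow> 'v \<Rightarrow> bool) \<Rightarrow> 'v \<Rightarrow> 'v set" where
  "nbr V E v = {u \<in> V. E v u}"

definition deg :: "'v set \<Rightarrow> ('v \<Rightarrow> 'v \<Rightarrow> bool) \<Rightarrow> 'v \<Rightarrow> nat" where
  "deg V E v = card (nbr V E v)"

definition sgnT :: "nat \<Rightarrow> nat \<Rightarrow> 'v set \<Rightarrow> 'v \<Rightarrow> real" where
  "sgnT p q T v = (if v \<in> T then real q else - real p)"

definition dvec :: "'v set \<Rightarrow> ('v \<Rightarrow> 'v \<Rightarrow> bool) \<Rightarrow> 'v set \<Rightarrow> 'v \<Rightarrow> nat \<times> nat" where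
  "dvec V E T v = (card (T \<inter> nbr V E v), card (nbr V E v - T))"

definition Bset :: "'v set \<Rightarrow> ('v \<Rightarrow> 'v \<Rightarrow> bool) \<Rightarrow> 'v set \<Rightarrow> (nat \<times> nat) set" where
  "Bset V E \<pi> = {(a, b). \<exists>v\<in>\<pi>. a + b = deg V E v}"

definition wdist :: "real \<Rightarrow> nat \<times> nat \<Rightarrow> nat \<times> nat \<Rightarrow> real" where
  "wdist K u u' = K * \<bar>real (fst u) / (real (fst u) + real (snd u))
                        - real (fst u') / (real (fst u') + real (snd u'))\<bar>"

text \<open>The signed measure D^pi_T on B_pi, given by its point masses.\<close>
definition Dpi :: "'v set \<Rightarrow> ('v \<Rightarrow> 'v \<Rightarrow> bool) \<Rightarrow> nat \<Rightarrow> nat \<Rightarrow> nat \<Rightarrow> 'v set \<Rightarrow> 'v set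
                   \<Rightarrow> nat \<times> nat \<Rightarrow> real" where
  "Dpi V E p q n \<pi> T u =
     (1 / (real p * real q * real n)) * (\<Sum>v\<in>{v \<in> \<pi>. dvec V E T v = u}. sgnT p q T v)"

definition wnorm :: "'v set \<Rightarrow> ('v \<Rightarrow> 'v \<Rightarrow> bool) \<Rightarrow> real \<Rightarrow> 'v set \<Rightarrow> (nat \<times> nat \<Rightarrow> real) \<Rightarrow> real" where
  "wnorm V E K \<pi> D =
     Sup {\<bar>\<Sum>u\<in>Bset V E \<pi>. g u * D u\<bar> | g :: nat \<times> nat \<Rightarrow> real.
            \<forall>u\<in>Bset V E \<pi>. \<forall>u'\<in>Bset V E \<pi>. \<bar>g u - g u'\<bar> \<le> wdist K u u'}"

definition part_of :: "'v set set \<Rightarrow> 'v \<Rightarrow> 'v set" where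
  "part_of Parts v = (THE \<pi>. \<pi> \<in> Parts \<and> v \<in> \<pi>)"

text \<open>xi, with f_v(S) = f_{Pi(v)}(|S|, |N(v) - S|)\<close>
definition xi :: "'v set \<Rightarrow> ('v \<Rightarrow> 'v \<Rightarrow> bool) \<Rightarrow> 'v set set \<Rightarrow> ('v set \<Rightarrow> nat \<times> nat \<Rightarrow> real)
                  \<Rightarrow> nat \<Rightarrow> nat \<Rightarrow> nat \<Rightarrow> 'v set \<Rightarrow> real" where
  "xi V E Parts f p q n T =
     (1 / (real p * real q * real n)) *
       (\<Sum>v\<in>V. sgnT p q T v * f (part_of Parts v) (card (T \<inter> nbr V E v), card (nbr V E v - T)))"

text \<open>The blocks are S_i = {w i j | j in {1..r}} for i < n
  (0-based block index). B = (B_0,...,B_{n-1}) ranges over tuples of p-subsets of {1..r},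
  chosen i.i.d. uniformly, i.e. uniformly on the product space.\<close>
definition rr_space :: "nat \<Rightarrow> nat \<Rightarrow> nat \<Rightarrow> (nat \<Rightarrow> nat set) set" where
  "rr_space n p r = PiE {..<n} (\<lambda>_. {B. B \<subseteq> {1..r} \<and> card B = p})"

definition rr_T :: "(nat \<Rightarrow> nat \<Rightarrow> 'v) \<Rightarrow> nat \<Rightarrow> (nat \<Rightarrow> nat set) \<Rightarrow> 'v set" where
  "rr_T w n B = {w i j | i j. i < n \<and> j \<in> B i}"

definition rr_expect :: "nat \<Rightarrow> nat \<Rightarrow> nat \<Rightarrow> ((nat \<Rightarrow> nat set) \<Rightarrow> real) \<Rightarrow> real" where
  "rr_expect n p r g = (\<Sum>B\<in>rr_space n p r. g B) / real (card (rr_space n p r))"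

definition block_of :: "(nat \<Rightarrow> nat \<Rightarrow> 'v) \<Rightarrow> nat \<Rightarrow> nat \<Rightarrow> 'v \<Rightarrow> 'v set" where
  "block_of w r n v = \<Union>{w i ` {1..r} | i. i < n \<and> v \<in> w i ` {1..r}}"

end

theory Submission
  imports Defs
begin

text \<open>
  Every block of the restricted randomization treats exactly \<open>p\<close> of its \<open>r\<close> units, so the signs
  \<open>\<sigma>\<^sub>T\<close> sum to zero on every part of \<open>\<Pi>\<close>.  Hence a test function that is \<open>K\<close>-Lipschitz in the
  treated fraction of the neighbourhood may be shifted by a constant, which bounds
  \<open>\<parallel>D\<^sup>\<pi>\<^sub>T\<parallel>\<^sub>W\<close> (and, for Lipschitz \<open>f\<^sub>\<pi>\<close>, also \<open>\<xi>\<close>) pointwise by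
  \<open>K/(pqn) \<Sum>\<^sub>v |\<sigma>\<^sub>T(v)| |x\<^sub>v - p/r|\<close>, where \<open>x\<^sub>v\<close> is the treated fraction of the neighbours of \<open>v\<close>.
  By Minkowski's inequality it suffices to bound the second moment of each summand.  For a vertex
  of degree \<open>d\<close>, \<open>d (x\<^sub>v - p/r)\<close> is a sum over the blocks of independent centred hypergeometric
  counts; only the count in the block of \<open>v\<close> itself is correlated with \<open>\<sigma>\<^sub>T(v)\<close>.  That block
  contributes at most \<open>a\<^sup>2 + 4a(pq/r)\<^sup>2\<close>, with \<open>a = |\<P>\<^sub>v \<inter> \<N>(v)|\<close>, and every other block
  contributes \<open>(pq/r)\<^sup>2\<close> per neighbour, so the second moment is at most
  \<open>(a\<^sup>2 + 4(pq/r)\<^sup>2 d)/d\<^sup>2\<close>, whose square root is the vertex term of the bound.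
\<close>

section \<open>Moments of uniform subsets of fixed size\<close>

definition ksubsets :: "'a set \<Rightarrow> nat \<Rightarrow> 'a set set" where
  "ksubsets R m = {B. B \<subseteq> R \<and> card B = m}"

lemma finite_ksubsets: "finite R \<Longrightarrow> finite (ksubsets R m)"
  unfolding ksubsets_def by (rule finite_subset[of _ "Pow R"]) auto

lemma card_ksubsets: "finite R \<Longrightarrow> card (ksubsets R m) = card R choose m"
  unfolding ksubsets_def by (rule n_subsets)

lemma card_ksubsets_supset:
  assumes R: "finite R" and F: "F \<subseteq> R" and Fm: "card F \<le> m"
  shows "card {B \<in> ksubsets R m. F \<subseteq> B} = (card R - card F) choose (m - card F)"
proof -
  have fF: "finite F" using R F finite_subset by blast
  have "bij_betw (\<lambda>B. B - F) {B \<in> ksubsets R m. F \<subseteq> B} (ksubsets (R - F) (m - card F))"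
  proof (rule bij_betw_byWitness[where f'="\<lambda>C. C \<union> F"])
    show "\<forall>B\<in>{B \<in> ksubsets R m. F \<subseteq> B}. B - F \<union> F = B" by auto
    show "\<forall>C\<in>ksubsets (R - F) (m - card F). C \<union> F - F = C" unfolding ksubsets_def by auto
    show "(\<lambda>B. B - F) ` {B \<in> ksubsets R m. F \<subseteq> B} \<subseteq> ksubsets (R - F) (m - card F)"
      unfolding ksubsets_def using R fF
      by (auto simp: card_Diff_subset intro: finite_subset)
    show "(\<lambda>C. C \<union> F) ` ksubsets (R - F) (m - card F) \<subseteq> {B \<in> ksubsets R m. F \<subseteq> B}"
    proof
      fix B assume "B \<in> (\<lambda>C. C \<union> F) ` ksubsets (R - F) (m - card F)"
      then obtain C where "C \<in> ksubsets (R - F) (m - card F)" and B: "B = C \<union> F" by blast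
      then have C: "C \<subseteq> R - F" "card C = m - card F" unfolding ksubsets_def by auto
      then have "card (C \<union> F) = card C + card F"
        using R fF by (intro card_Un_disjoint) (auto intro: finite_subset)
      then show "B \<in> {B \<in> ksubsets R m. F \<subseteq> B}" using B C Fm F unfolding ksubsets_def by auto
    qed
  qed
  then have "card {B \<in> ksubsets R m. F \<subseteq> B} = card (ksubsets (R - F) (m - card F))"
    by (rule bij_betw_same_card)
  also have "\<dots> = (card R - card F) choose (m - card F)"
    using R F fF by (simp add: card_ksubsets card_Diff_subset)
  finally show ?thesis .
qed

lemma card_ksubsets_mem:
  assumes "finite R" "a \<in> R"
  shows "real (card R) * real (card {B \<in> ksubsets R m. a \<in> B}) = real m * real (card R choose m)"
proof (cases "m = 0")
  case True
  then have "{B \<in> ksubsets R m. a \<in> B} = {}"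
    using assms unfolding ksubsets_def by (auto simp: card_eq_0_iff intro: finite_subset)
  then show ?thesis using True by (simp only: card.empty)
next
  case False
  then have "card {B \<in> ksubsets R m. a \<in> B} = (card R - 1) choose (m - 1)"
    using card_ksubsets_supset[of R "{a}" m] assms by simp
  moreover have "m * (card R choose m) = card R * ((card R - 1) choose (m - 1))"
    by (rule times_binomial_minus1_eq) (use False in simp)
  ultimately show ?thesis by (metis of_nat_mult)
qed

lemma card_ksubsets_mem2:
  assumes "finite R" "a \<in> R" "b \<in> R" "a \<noteq> b"
  shows "real (card R) * (real (card R) - 1) * real (card {B \<in> ksubsets R m. a \<in> B \<and> b \<in> B})
       = real m * (real m - 1) * real (card R choose m)"
proof (cases "m \<le> 1")
  case True
  have "{B \<in> ksubsets R m. a \<in> B \<and> b \<in> B} = {}"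
  proof (rule ccontr)
    assume "{B \<in> ksubsets R m. a \<in> B \<and> b \<in> B} \<noteq> {}"
    then obtain B where "B \<subseteq> R" "card B = m" "{a, b} \<subseteq> B" unfolding ksubsets_def by auto
    then have "card {a, b} \<le> m" using assms(1) by (metis card_mono finite_subset)
    then show False using True assms(4) by simp
  qed
  moreover have "real m * (real m - 1) = 0" using True by (cases m) auto
  ultimately show ?thesis by (simp only: card.empty)
next
  case False
  have R2: "card R \<ge> 2"
    using assms card_mono[of R "{a, b}"] by auto
  have "card {B \<in> ksubsets R m. a \<in> B \<and> b \<in> B} = (card R - 2) choose (m - 2)"
    using card_ksubsets_supset[of R "{a, b}" m] assms False by (simp add: numeral_2_eq_2)
  moreover have "m * (card R choose m) = card R * ((card R - 1) choose (m - 1))"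
    by (rule times_binomial_minus1_eq) (use False in simp)
  moreover have "(m - 1) * ((card R - 1) choose (m - 1)) = (card R - 1) * ((card R - 2) choose (m - 2))"
    using times_binomial_minus1_eq[of "m - 1" "card R - 1"] False
    by (simp add: numeral_2_eq_2 diff_diff_add)
  ultimately have "card R * (card R - 1) * card {B \<in> ksubsets R m. a \<in> B \<and> b \<in> B}
                 = m * (m - 1) * (card R choose m)"
    by (metis mult.assoc mult.left_commute)
  then have "real (card R * (card R - 1) * card {B \<in> ksubsets R m. a \<in> B \<and> b \<in> B})
           = real (m * (m - 1) * (card R choose m))"
    by (rule arg_cong)
  then show ?thesis using R2 False by (simp add: of_nat_diff)
qed

lemma card_Int_eq_sum_indicator:
  "finite A \<Longrightarrow> real (card (B \<inter> A)) = (\<Sum>a\<in>A. if a \<in> B then 1 else 0)"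
  by (simp add: sum.If_cases Int_commute)

lemma card_Int_sq_eq_sum_pairs:
  assumes "finite A"
  shows "real (card (B \<inter> A))^2 = (\<Sum>a\<in>A. \<Sum>b\<in>A. if a \<in> B \<and> b \<in> B then 1 else 0)"
proof -
  have "real (card (B \<inter> A))^2
      = (\<Sum>a\<in>A. \<Sum>b\<in>A. (if a \<in> B then 1 else 0) * (if b \<in> B then 1 else (0::real)))"
    using assms by (simp add: card_Int_eq_sum_indicator power2_eq_square sum_product)
  also have "\<dots> = (\<Sum>a\<in>A. \<Sum>b\<in>A. if a \<in> B \<and> b \<in> B then 1 else 0)"
    by (intro sum.cong refl) auto
  finally show ?thesis .
qed

lemma sum_count_ksubsets:
  assumes "finite R"
  shows "(\<Sum>B\<in>ksubsets R m. if P B then 1 else 0) = real (card {B \<in> ksubsets R m. P B})"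
  using finite_ksubsets[OF assms] by (simp add: sum.If_cases Int_def)

lemma sum_card_Int_ksubsets:
  assumes R: "finite R" and A: "A \<subseteq> R"
  shows "real (card R) * (\<Sum>B\<in>ksubsets R m. real (card (B \<inter> A)))
       = real (card A) * real m * real (card R choose m)"
proof -
  have fA: "finite A" using R A finite_subset by blast
  have "(\<Sum>B\<in>ksubsets R m. real (card (B \<inter> A)))
      = (\<Sum>a\<in>A. \<Sum>B\<in>ksubsets R m. if a \<in> B then 1 else 0)"
    using fA by (simp add: card_Int_eq_sum_indicator sum.swap[where A = "ksubsets R m"])
  also have "\<dots> = (\<Sum>a\<in>A. real (card {B \<in> ksubsets R m. a \<in> B}))"
    using R by (simp add: sum_count_ksubsets)
  finally have "real (card R) * (\<Sum>B\<in>ksubsets R m. real (card (B \<inter> A)))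
      = (\<Sum>a\<in>A. real (card R) * real (card {B \<in> ksubsets R m. a \<in> B}))"
    by (simp add: sum_distrib_left)
  also have "\<dots> = (\<Sum>a\<in>A. real m * real (card R choose m))"
    using card_ksubsets_mem[OF R] A by (intro sum.cong) auto
  finally show ?thesis by simp
qed

lemma sum_card_Int_sq_ksubsets:
  assumes R: "finite R" and A: "A \<subseteq> R"
  shows "real (card R) * (real (card R) - 1) * (\<Sum>B\<in>ksubsets R m. real (card (B \<inter> A))^2)
       = real (card A) * real m * real (card R choose m)
           * (real (card R) - 1 + (real (card A) - 1) * (real m - 1))"
proof -
  define N where "N = real (card R)"
  define C where "C = real (card R choose m)"
  define cnt where "cnt = (\<lambda>a b. real (card {B \<in> ksubsets R m. a \<in> B \<and> b \<in> B}))"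
  have fA: "finite A" using R A finite_subset by blast
  have "(\<Sum>B\<in>ksubsets R m. real (card (B \<inter> A))^2) = (\<Sum>a\<in>A. \<Sum>b\<in>A. cnt a b)"
    unfolding card_Int_sq_eq_sum_pairs[OF fA] cnt_def using R
    by (simp add: sum.swap[where A = "ksubsets R m"] sum_count_ksubsets)
  then have "N * (N - 1) * (\<Sum>B\<in>ksubsets R m. real (card (B \<inter> A))^2)
           = (\<Sum>a\<in>A. N * (N - 1) * (\<Sum>b\<in>A. cnt a b))"
    by (simp add: sum_distrib_left)
  also have "\<dots> = (\<Sum>a\<in>A. real m * C * (N - 1 + (real (card A) - 1) * (real m - 1)))"
  proof (rule sum.cong[OF refl])
    fix a assume a: "a \<in> A"
    have diag: "N * cnt a a = m * C"
      using card_ksubsets_mem[OF R, of a m] a A unfolding N_def C_def cnt_def by auto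
    have offdiag: "N * (N - 1) * cnt a b = real m * (real m - 1) * C" if "b \<in> A - {a}" for b
      using card_ksubsets_mem2[OF R, of a b m] a A that unfolding N_def C_def cnt_def by auto
    have "N * (N - 1) * (\<Sum>b\<in>A. cnt a b)
        = (N - 1) * (N * cnt a a) + (\<Sum>b\<in>A - {a}. N * (N - 1) * cnt a b)"
      using fA a by (simp add: sum.remove sum_distrib_left algebra_simps)
    also have "\<dots> = (N - 1) * (m * C) + (\<Sum>b\<in>A - {a}. real m * (real m - 1) * C)"
      using diag offdiag by simp
    also have "\<dots> = real m * C * (N - 1 + (real (card A) - 1) * (real m - 1))"
    proof -
      have "card A = Suc (card (A - {a}))" using fA a by (rule card.remove)
      then have "real (card A) = real (card (A - {a})) + 1" by simp
      then show ?thesis by (simp add: algebra_simps)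
    qed
    finally show "N * (N - 1) * (\<Sum>b\<in>A. cnt a b)
                = real m * C * (N - 1 + (real (card A) - 1) * (real m - 1))" .
  qed
  also have "\<dots> = real (card A) * (real m * C * (N - 1 + (real (card A) - 1) * (real m - 1)))"
    by simp
  finally show ?thesis unfolding N_def C_def by (simp add: algebra_simps)
qed

lemma real_card_Int_sq_eq:
  assumes "finite A" "card A \<le> 1"
  shows "real (card (B \<inter> A))^2 = real (card (B \<inter> A))"
proof -
  have "card (B \<inter> A) \<le> 1" using card_mono[OF assms(1), of "B \<inter> A"] assms(2) by auto
  then show ?thesis by (cases "card (B \<inter> A)") auto
qed

lemma sum_card_Int_sq_ksubsets_le:
  assumes R: "finite R" and A: "A \<subseteq> R" and mN: "m \<le> card R"
  shows "real (card R)^2 * (\<Sum>B\<in>ksubsets R m. real (card (B \<inter> A))^2)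
       \<le> real (card R choose m) * (real (card A) * real m * (real (card R) - real m)
                                   + (real (card A) * real m)^2)"
proof -
  define N where "N = real (card R)"
  define k where "k = real (card A)"
  define C where "C = real (card R choose m)"
  define M where "M = real m"
  define S2 where "S2 = (\<Sum>B\<in>ksubsets R m. real (card (B \<inter> A))^2)"
  have kN: "card A \<le> card R" using R A card_mono by blast
  show ?thesis
  proof (cases "card A \<le> 1")
    case True
    have "S2 = (\<Sum>B\<in>ksubsets R m. real (card (B \<inter> A)))"
      unfolding S2_def using finite_subset[OF A R] True by (intro sum.cong refl real_card_Int_sq_eq)
    then have "N^2 * S2 = N * (k * M * C)"
      using sum_card_Int_ksubsets[OF R A, of m] unfolding N_def k_def C_def M_def
      by (simp add: power2_eq_square)
    also have "\<dots> = C * (k * M * (N - M) + (k * M)^2)"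
    proof -
      have "k^2 = k" using True unfolding k_def by (cases "card A") auto
      then have "(k * M)^2 = k * M^2" by (simp add: power_mult_distrib)
      then show ?thesis by (simp add: power2_eq_square algebra_simps)
    qed
    finally show ?thesis unfolding N_def k_def C_def M_def S2_def by simp
  next
    case False
    then have N2: "N \<ge> 2" using kN unfolding N_def by simp
    have key: "N * (N - 1 + (k - 1) * (M - 1)) \<le> (N - 1) * (N - M + k * M)"
    proof -
      have "(N - 1) * (N - M + k * M) - N * (N - 1 + (k - 1) * (M - 1)) = (k - 1) * (N - M)"
        by (simp add: algebra_simps)
      moreover have "0 \<le> (k - 1) * (N - M)"
        using False mN unfolding k_def N_def M_def by simp
      ultimately show ?thesis by linarith
    qed
    have moment: "N * (N - 1) * S2 = k * M * C * (N - 1 + (k - 1) * (M - 1))"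
      using sum_card_Int_sq_ksubsets[OF R A, of m] unfolding N_def k_def C_def M_def S2_def .
    have "(N - 1) * (N^2 * S2) = N * (N * (N - 1) * S2)"
      by (simp add: power2_eq_square algebra_simps)
    also have "\<dots> = N * (k * M * C * (N - 1 + (k - 1) * (M - 1)))"
      by (simp only: moment)
    also have "\<dots> = (k * M * C) * (N * (N - 1 + (k - 1) * (M - 1)))" by simp
    also have "\<dots> \<le> (k * M * C) * ((N - 1) * (N - M + k * M))"
      using key unfolding k_def C_def M_def by (intro mult_left_mono) auto
    also have "\<dots> = (N - 1) * (C * (k * M * (N - M) + (k * M)^2))"
      by (simp add: power2_eq_square algebra_simps)
    finally show ?thesis using N2 unfolding N_def k_def C_def M_def S2_def by simp
  qed
qed

lemma sum_sq_diff_card_Int_ksubsets_le: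
  assumes R: "finite R" and A: "A \<subseteq> R" and mN: "m \<le> card R" and N0: "card R > 0"
  shows "(\<Sum>B\<in>ksubsets R m. (real (card (B \<inter> A)) - t)^2)
       \<le> real (card R choose m) * (real (card A) * real m * (real (card R) - real m) / real (card R)^2
                                   + (real (card A) * real m / real (card R) - t)^2)"
proof -
  define N where "N = real (card R)"
  define k where "k = real (card A)"
  define C where "C = real (card R choose m)"
  define S1 where "S1 = (\<Sum>B\<in>ksubsets R m. real (card (B \<inter> A)))"
  define S2 where "S2 = (\<Sum>B\<in>ksubsets R m. real (card (B \<inter> A))^2)"
  have Npos: "N > 0" using N0 unfolding N_def by simp
  have "(\<Sum>B\<in>ksubsets R m. (real (card (B \<inter> A)) - t)^2) = S2 - 2 * t * S1 + t^2 * C"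
    unfolding S1_def S2_def C_def power2_diff
    by (simp add: sum.distrib sum_subtractf sum_distrib_left card_ksubsets[OF R] ac_simps)
  also have "\<dots> \<le> C * (k * m * (N - m) + (k * m)^2) / N^2 - 2 * t * (k * m * C / N) + t^2 * C"
  proof -
    have "S1 = k * m * C / N"
      using sum_card_Int_ksubsets[OF R A, of m] Npos
      unfolding S1_def N_def k_def C_def by (simp add: field_simps)
    moreover have "S2 \<le> C * (k * m * (N - m) + (k * m)^2) / N^2"
      using sum_card_Int_sq_ksubsets_le[OF R A mN] Npos
      unfolding S2_def N_def k_def C_def by (simp add: field_simps)
    ultimately show ?thesis by simp
  qed
  also have "\<dots> = C * (k * m * (N - m) / N^2 + (k * m / N - t)^2)"
    using Npos by (simp add: field_simps power2_eq_square)
  finally show ?thesis unfolding N_def k_def C_def .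
qed

lemma sum_card_Int_ksubsets_centred:
  assumes R: "finite R" and A: "A \<subseteq> R" and cR: "card R = p + q" and r0: "p + q > 0"
  shows "(\<Sum>B\<in>ksubsets R p. real (card (B \<inter> A)) - real (card A) * real p / real (p + q)) = 0"
proof -
  have "real (p + q) * (\<Sum>B\<in>ksubsets R p. real (card (B \<inter> A)))
      = real (card A) * real p * real ((p + q) choose p)"
    using sum_card_Int_ksubsets[OF R A, of p] cR by simp
  moreover have "real (p + q) > 0" using r0 by (metis of_nat_0_less_iff)
  ultimately have "(\<Sum>B\<in>ksubsets R p. real (card (B \<inter> A)))
                  = real ((p + q) choose p) * (real (card A) * real p / real (p + q))"
    by (simp add: field_simps)
  then show ?thesis by (simp add: sum_subtractf card_ksubsets[OF R] cR)
qed

lemma sum_sq_card_Int_ksubsets_centred_le: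
  assumes R: "finite R" and A: "A \<subseteq> R" and cR: "card R = p + q" and r0: "p + q > 0"
  shows "(\<Sum>B\<in>ksubsets R p. (real (card (B \<inter> A)) - real (card A) * real p / real (p + q))^2)
       \<le> real ((p + q) choose p) * (real (card A) * real p * real q / real (p + q)^2)"
  using sum_sq_diff_card_Int_ksubsets_le[OF R A, of p "real (card A) * real p / real (p + q)"] cR r0
  by simp

lemma sum_sq_sgnT_ksubsets:
  assumes R: "finite R" and j: "j \<in> R" and cR: "card R = p + q"
  shows "(\<Sum>B\<in>ksubsets R p. (sgnT p q B j)^2) = real ((p + q) choose p) * (real p * real q)"
proof -
  define C where "C = real ((p + q) choose p)"
  have cnt: "(real p + real q) * real (card {B \<in> ksubsets R p. j \<in> B}) = real p * C"
    using card_ksubsets_mem[OF R j, of p] cR unfolding C_def by simp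
  have "(\<Sum>B\<in>ksubsets R p. (sgnT p q B j)^2)
      = (\<Sum>B\<in>ksubsets R p. real p^2 + (if j \<in> B then real q^2 - real p^2 else 0))"
    unfolding sgnT_def by (intro sum.cong refl) auto
  also have "\<dots> = real p^2 * C + (real q - real p) * ((real p + real q) * real (card {B \<in> ksubsets R p. j \<in> B}))"
    using finite_ksubsets[OF R] card_ksubsets[OF R] cR unfolding C_def
    by (simp add: sum.distrib sum.If_cases Int_def power2_eq_square algebra_simps)
  also have "\<dots> = C * (real p * real q)"
    unfolding cnt by (simp add: power2_eq_square algebra_simps)
  finally show ?thesis unfolding C_def .
qed

lemma sum_ksubsets_split_mem:
  assumes R: "finite R" and j: "j \<in> R" and m0: "m > 0"
  shows "(\<Sum>B\<in>ksubsets R m. h B)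
       = (\<Sum>B\<in>ksubsets (R - {j}) (m - 1). h (insert j B)) + (\<Sum>B\<in>ksubsets (R - {j}) m. h B)"
proof -
  have "(\<Sum>B\<in>ksubsets R m. h B)
      = (\<Sum>B\<in>{B \<in> ksubsets R m. j \<in> B} \<union> {B \<in> ksubsets R m. j \<notin> B}. h B)"
    by (rule sum.cong) auto
  also have "\<dots> = (\<Sum>B\<in>{B \<in> ksubsets R m. j \<in> B}. h B) + (\<Sum>B\<in>{B \<in> ksubsets R m. j \<notin> B}. h B)"
    using finite_ksubsets[OF R] by (intro sum.union_disjoint) auto
  finally have "(\<Sum>B\<in>ksubsets R m. h B)
      = (\<Sum>B\<in>{B \<in> ksubsets R m. j \<in> B}. h B) + (\<Sum>B\<in>{B \<in> ksubsets R m. j \<notin> B}. h B)" .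
  moreover have "{B \<in> ksubsets R m. j \<notin> B} = ksubsets (R - {j}) m"
    unfolding ksubsets_def by auto
  moreover have "(\<Sum>B\<in>{B \<in> ksubsets R m. j \<in> B}. h B) = (\<Sum>B\<in>ksubsets (R - {j}) (m - 1). h (insert j B))"
  proof (rule sum.reindex_bij_witness[where i = "insert j" and j = "\<lambda>B. B - {j}"])
    fix B assume "B \<in> {B \<in> ksubsets R m. j \<in> B}"
    then show "insert j (B - {j}) = B" "B - {j} \<in> ksubsets (R - {j}) (m - 1)"
      "h (insert j (B - {j})) = h B"
      using R unfolding ksubsets_def by (auto simp: card_Diff_singleton insert_absorb)
  next
    fix B assume "B \<in> ksubsets (R - {j}) (m - 1)"
    then have B: "B \<subseteq> R - {j}" "card B = m - 1" unfolding ksubsets_def by auto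
    have "finite B" "j \<notin> B" using B R finite_subset by auto
    then have "card (insert j B) = m" using B m0 by simp
    then show "insert j B \<in> {B \<in> ksubsets R m. j \<in> B}"
      using B j unfolding ksubsets_def by auto
    show "insert j B - {j} = B" using B by auto
  qed
  ultimately show ?thesis by simp
qed

text \<open>
  The left-hand side is the second moment of \<open>\<sigma> (X - k p/(p+q))\<close> within the block of a vertex,
  split according to whether the vertex itself is treated (probability \<open>p/(p+q)\<close>); in either case
  \<open>X\<close> counts the treated elements of a \<open>k\<close>-set among the other \<open>p+q-1\<close> slots.
\<close>

lemma own_block_moment_eq:
  fixes p q k :: real
  assumes p: "p \<ge> 1" and q: "q \<ge> 1"
  shows "q^2 * (p / (p + q)) * (k * (p - 1) * q / (p + q - 1)^2 + (k * (p - 1) / (p + q - 1) - k * p / (p + q))^2)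
       + p^2 * (q / (p + q)) * (k * p * (q - 1) / (p + q - 1)^2 + (k * p / (p + q - 1) - k * p / (p + q))^2)
       = (p * q * k / ((p + q) * (p + q - 1)^2)) * (q^2 * (p - 1) + p^2 * (q - 1))
         + (p * q * k^2 * (q^3 + p^3)) / ((p + q)^3 * (p + q - 1)^2)"
proof -
  define r where "r = p + q"
  define a where "a = p + q - 1"
  have r: "r > 0" and a: "a > 0" using p q unfolding r_def a_def by auto
  have b1: "k * (p - 1) / a - k * p / r = - (k * q / (r * a))"
    and b2: "k * p / a - k * p / r = k * p / (r * a)"
    using r a unfolding r_def a_def by (simp_all add: field_simps)
  have "q^2 * (p / r) * (k * (p - 1) * q / a^2 + (k * (p - 1) / a - k * p / r)^2)
       + p^2 * (q / r) * (k * p * (q - 1) / a^2 + (k * p / a - k * p / r)^2)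
       = (p * q * k / (r * a^2)) * (q^2 * (p - 1) + p^2 * (q - 1)) + (p * q * k^2 * (q^3 + p^3)) / (r^3 * a^2)"
    unfolding b1 b2 using r a by (simp add: field_simps power2_eq_square power3_eq_cube)
  then show ?thesis unfolding r_def a_def .
qed

lemma own_block_moment_ineq:
  fixes p q k :: real
  assumes p: "p \<ge> 1" and q: "q \<ge> 1" and k: "k \<ge> 0"
  shows "q^2 * (p / (p + q)) * (k * (p - 1) * q / (p + q - 1)^2 + (k * (p - 1) / (p + q - 1) - k * p / (p + q))^2)
       + p^2 * (q / (p + q)) * (k * p * (q - 1) / (p + q - 1)^2 + (k * p / (p + q - 1) - k * p / (p + q))^2)
       \<le> k^2 + 4 * k * (p * q / (p + q))^2"
proof -
  define r where "r = p + q"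
  define a where "a = p + q - 1"
  have r2: "r \<ge> 2" and a1: "a \<ge> 1" and ra: "r = a + 1" using p q unfolding r_def a_def by auto
  have rpos: "r > 0" and apos: "a > 0" using r2 a1 by auto
  have t1: "(p * q * k / (r * a^2)) * (q^2 * (p - 1) + p^2 * (q - 1)) \<le> 4 * k * (p * q / r)^2"
  proof -
    have "q^2 * (p - 1) + p^2 * (q - 1) \<le> p * q * r" unfolding r_def using p q
      by (simp add: power2_eq_square algebra_simps)
    moreover have "0 \<le> p * q * k / (r * a^2)" using p q k rpos apos by simp
    ultimately have "(p * q * k / (r * a^2)) * (q^2 * (p - 1) + p^2 * (q - 1)) \<le> (p * q * k / (r * a^2)) * (p * q * r)"
      by (rule mult_left_mono)
    also have "\<dots> = k * (p * q)^2 / a^2" using rpos by (simp add: field_simps power2_eq_square)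
    also have "\<dots> \<le> k * (p * q)^2 / (r^2 / 4)"
    proof (rule divide_left_mono)
      have "r^2 \<le> (2 * a)^2" using ra a1 rpos by (intro power_mono) auto
      then show "r^2 / 4 \<le> a^2" by (simp add: power2_eq_square)
      show "0 \<le> k * (p * q)^2" using k by simp
      show "0 < a^2 * (r^2 / 4)" using rpos apos by simp
    qed
    also have "\<dots> = 4 * k * (p * q / r)^2" by (simp add: power_divide)
    finally show ?thesis .
  qed
  have t2: "(p * q * k^2 * (q^3 + p^3)) / (r^3 * a^2) \<le> k^2"
  proof -
    have "1 \<le> p * q" using p q by (metis mult_mono' mult_1 zero_le_one order_trans)
    moreover have "(p + q - 1)^2 - p * q = (p - 1)^2 + (q - 1)^2 + (p * q - 1)"
      by (simp add: power2_eq_square algebra_simps)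
    ultimately have "p * q \<le> a^2" unfolding a_def
      by (metis add_nonneg_nonneg diff_ge_0_iff_ge zero_le_power2)
    moreover have "q^3 + p^3 \<le> r^3"
      unfolding r_def using p q by (simp add: power3_eq_cube algebra_simps)
    ultimately have "p * q * (q^3 + p^3) \<le> a^2 * r^3"
      using p q by (intro mult_mono) auto
    then have "k^2 * (p * q * (q^3 + p^3)) \<le> k^2 * (a^2 * r^3)" by (rule mult_left_mono) simp
    then show ?thesis using rpos apos by (simp add: divide_le_eq algebra_simps)
  qed
  show ?thesis using own_block_moment_eq[OF p q, of k] t1 t2 unfolding r_def a_def by linarith
qed

lemma sum_sq_sgnT_mult_ksubsets:
  assumes R: "finite R" and j: "j \<in> R" and A: "A \<subseteq> R - {j}" and p0: "p > 0"
  shows "(\<Sum>B\<in>ksubsets R p. (sgnT p q B j)^2 * h (B \<inter> A))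
       = real q^2 * (\<Sum>B\<in>ksubsets (R - {j}) (p - 1). h (B \<inter> A))
         + real p^2 * (\<Sum>B\<in>ksubsets (R - {j}) p. h (B \<inter> A))"
proof -
  have "insert j B \<inter> A = B \<inter> A" for B using A by auto
  moreover have "j \<notin> B" if "B \<in> ksubsets (R - {j}) p" for B using that unfolding ksubsets_def by auto
  ultimately show ?thesis
    unfolding sum_ksubsets_split_mem[OF R j p0] sgnT_def sum_distrib_left
    by (intro arg_cong2[where f = "(+)"] sum.cong refl) auto
qed

lemma sum_sq_sgnT_card_Int_ksubsets_le:
  assumes R: "finite R" and j: "j \<in> R" and A: "A \<subseteq> R - {j}" and cR: "card R = p + q"
    and p0: "p > 0" and q0: "q > 0"
  shows "(\<Sum>B\<in>ksubsets R p. (sgnT p q B j)^2 * (real (card (B \<inter> A)) - real (card A) * real p / real (p + q))^2)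
       \<le> real ((p + q) choose p) * (real (card A)^2 + 4 * real (card A) * (real p * real q / real (p + q))^2)"
proof -
  define k where "k = real (card A)"
  define t where "t = k * real p / real (p + q)"
  define C where "C = real ((p + q) choose p)"
  define dev where "dev = (\<lambda>B. (real (card (B \<inter> A)) - t)^2)"
  have R': "finite (R - {j})" and cR': "card (R - {j}) = p + q - 1" using R j cR by auto
  have "(\<Sum>B\<in>ksubsets R p. (sgnT p q B j)^2 * dev B)
      = real q^2 * (\<Sum>B\<in>ksubsets (R - {j}) (p - 1). dev B) + real p^2 * (\<Sum>B\<in>ksubsets (R - {j}) p. dev B)"
    unfolding dev_def by (rule sum_sq_sgnT_mult_ksubsets[OF R j A p0])
  also have "\<dots> \<le> real q^2 * (real ((p + q - 1) choose (p - 1))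
                     * (k * real (p - 1) * real q / real (p + q - 1)^2 + (k * real (p - 1) / real (p + q - 1) - t)^2))
                 + real p^2 * (real ((p + q - 1) choose p)
                     * (k * real p * real (q - 1) / real (p + q - 1)^2 + (k * real p / real (p + q - 1) - t)^2))"
    unfolding dev_def
    using sum_sq_diff_card_Int_ksubsets_le[OF R' A, of "p - 1" t]
      sum_sq_diff_card_Int_ksubsets_le[OF R' A, of p t] cR' p0 q0
    unfolding k_def by (intro add_mono mult_left_mono) (auto simp: of_nat_diff)
  also have "\<dots> = C * (real q^2 * (real p / (real p + real q)) * (k * (real p - 1) * real q / (real p + real q - 1)^2
                         + (k * (real p - 1) / (real p + real q - 1) - k * real p / (real p + real q))^2)
                 + real p^2 * (real q / (real p + real q)) * (k * real p * (real q - 1) / (real p + real q - 1)^2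
                         + (k * real p / (real p + real q - 1) - k * real p / (real p + real q))^2))"
  proof -
    have rpos: "real (p + q) > 0" using p0 by simp
    have "real (p + q) * real ((p + q - 1) choose (p - 1)) = real p * C"
      using times_binomial_minus1_eq[of p "p + q"] p0 unfolding C_def by (metis of_nat_mult)
    then have e1: "real ((p + q - 1) choose (p - 1)) = real p * C / real (p + q)"
      using rpos by (simp add: field_simps)
    have "real (p + q) * real ((p + q - 1) choose p) = real q * C"
      using binomial_absorb_comp[of "p + q" p] unfolding C_def by (metis of_nat_mult add_diff_cancel_left')
    then have e2: "real ((p + q - 1) choose p) = real q * C / real (p + q)"
      using rpos by (simp add: field_simps)
    have cv: "real (p + q - 1) = real p + real q - 1" "real (p - 1) = real p - 1"
      "real (q - 1) = real q - 1" "real (p + q) = real p + real q"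
      using p0 q0 by (auto simp: of_nat_diff)
    show ?thesis unfolding e1 e2 t_def cv by (simp add: field_simps)
  qed
  also have "\<dots> \<le> C * (k^2 + 4 * k * (real p * real q / real (p + q))^2)"
    using own_block_moment_ineq[of "real p" "real q" k] p0 q0 unfolding C_def k_def
    by (intro mult_left_mono) auto
  finally show ?thesis unfolding dev_def t_def k_def C_def .
qed

section \<open>Weighted sums over products of independent coordinates\<close>

lemma prod_if_single:
  assumes "finite I" "a \<in> I"
  shows "(\<Prod>l\<in>I. if l = a then X else (c::real)) = X * c ^ (card I - 1)"
proof -
  have "(\<Prod>l\<in>I. if l = a then X else c) = X * (\<Prod>l\<in>I - {a}. if l = a then X else c)"
    using assms by (simp add: prod.remove)
  also have "(\<Prod>l\<in>I - {a}. if l = a then X else c) = (\<Prod>l\<in>I - {a}. c)" by (intro prod.cong) auto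
  finally show ?thesis using assms by simp
qed

lemma prod_if_pair:
  assumes "finite I" "a \<in> I" "b \<in> I" "a \<noteq> b"
  shows "(\<Prod>l\<in>I. if l = a then X else if l = b then Y else (c::real)) = X * Y * c ^ (card I - 2)"
proof -
  have "(\<Prod>l\<in>I. if l = a then X else if l = b then Y else c)
      = X * (\<Prod>l\<in>I - {a}. if l = a then X else if l = b then Y else c)"
    using assms by (simp add: prod.remove)
  also have "(\<Prod>l\<in>I - {a}. if l = a then X else if l = b then Y else c) = (\<Prod>l\<in>I - {a}. if l = b then Y else c)"
    by (intro prod.cong) auto
  also have "\<dots> = Y * c ^ (card (I - {a}) - 1)" using assms by (intro prod_if_single) auto
  finally show ?thesis using assms by (simp add: numeral_2_eq_2 diff_diff_add mult.assoc)
qed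

lemma sum_PiE_three_coords:
  fixes F G H :: "'a \<Rightarrow> real"
  assumes S: "finite S" and I: "finite I" and abc: "a \<in> I" "b \<in> I" "c \<in> I"
  shows "(\<Sum>B\<in>PiE I (\<lambda>_. S). F (B a) * G (B b) * H (B c))
       = (\<Prod>l\<in>I. \<Sum>x\<in>S. (if l = a then F x else 1) * (if l = b then G x else 1) * (if l = c then H x else 1))"
proof -
  define f where "f = (\<lambda>l x. (if l = a then F x else 1) * (if l = b then G x else 1) * (if l = c then H x else 1))"
  have "F (B a) * G (B b) * H (B c) = (\<Prod>l\<in>I. f l (B l))" for B
    unfolding f_def using I abc by (simp add: prod.distrib prod.delta)
  then have "(\<Sum>B\<in>PiE I (\<lambda>_. S). F (B a) * G (B b) * H (B c)) = (\<Sum>B\<in>PiE I (\<lambda>_. S). \<Prod>l\<in>I. f l (B l))"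
    by simp
  also have "\<dots> = (\<Prod>l\<in>I. \<Sum>x\<in>S. f l x)" by (rule prod_sum_PiE[symmetric]) (use I S in auto)
  finally show ?thesis unfolding f_def .
qed

lemma sum_PiE_weighted_products:
  fixes s :: "'a \<Rightarrow> real" and Y :: "'i \<Rightarrow> 'a \<Rightarrow> real"
  assumes S: "finite S" and I: "finite I" and i0: "i0 \<in> I" and ij: "i \<in> I" "j \<in> I"
    and centred: "\<And>i. i \<in> I \<Longrightarrow> (\<Sum>x\<in>S. Y i x) = 0"
  shows "(\<Sum>B\<in>PiE I (\<lambda>_. S). (s (B i0))^2 * Y i (B i) * Y j (B j))
       = (if i \<noteq> j then 0
          else if i = i0 then (\<Sum>x\<in>S. (s x * Y i0 x)^2) * real (card S)^(card I - 1)
          else (\<Sum>x\<in>S. (s x)^2) * (\<Sum>x\<in>S. (Y i x)^2) * real (card S)^(card I - 2))"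
proof -
  define F where "F = (\<lambda>l x. (if l = i0 then (s x)^2 else 1) * (if l = i then Y i x else 1)
                              * (if l = j then Y j x else 1))"
  have const: "(\<Sum>x\<in>S. 1) = real (card S)" by simp
  have "(\<Sum>B\<in>PiE I (\<lambda>_. S). (s (B i0))^2 * Y i (B i) * Y j (B j)) = (\<Prod>l\<in>I. \<Sum>x\<in>S. F l x)"
    unfolding F_def by (rule sum_PiE_three_coords[OF S I i0 ij])
  also have "\<dots> = (if i \<noteq> j then 0
          else if i = i0 then (\<Sum>x\<in>S. (s x * Y i0 x)^2) * real (card S)^(card I - 1)
          else (\<Sum>x\<in>S. (s x)^2) * (\<Sum>x\<in>S. (Y i x)^2) * real (card S)^(card I - 2))"
  proof (cases "i = j")
    case False
    then obtain l where l: "l \<in> {i, j}" "l \<noteq> i0" by blast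
    then have "(\<Sum>x\<in>S. F l x) = 0" using ij centred False unfolding F_def by auto
    then show ?thesis using False l ij by (intro prod_zero[OF I, THEN trans]) auto
  next
    case True
    show ?thesis
    proof (cases "i = i0")
      case True
      have "(\<Prod>l\<in>I. \<Sum>x\<in>S. F l x) = (\<Prod>l\<in>I. if l = i0 then \<Sum>x\<in>S. (s x * Y i0 x)^2 else real (card S))"
        unfolding F_def const[symmetric] using True \<open>i = j\<close>
        by (intro prod.cong refl) (simp add: power2_eq_square ac_simps)
      then show ?thesis using True \<open>i = j\<close> I i0 by (simp add: prod_if_single)
    next
      case False
      have "(\<Prod>l\<in>I. \<Sum>x\<in>S. F l x) = (\<Prod>l\<in>I. if l = i0 then \<Sum>x\<in>S. (s x)^2
                                              else if l = i then \<Sum>x\<in>S. (Y i x)^2 else real (card S))"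
        unfolding F_def const[symmetric] using False \<open>i = j\<close>
        by (intro prod.cong refl) (auto simp: power2_eq_square)
      then show ?thesis using False \<open>i = j\<close> I i0 ij by (simp add: prod_if_pair)
    qed
  qed
  finally show ?thesis .
qed

lemma sum_PiE_sq_weighted_centred_sum_eq:
  fixes s :: "'a \<Rightarrow> real" and Y :: "'i \<Rightarrow> 'a \<Rightarrow> real"
  assumes S: "finite S" and I: "finite I" and i0: "i0 \<in> I"
    and centred: "\<And>i. i \<in> I \<Longrightarrow> (\<Sum>x\<in>S. Y i x) = 0"
  shows "(\<Sum>B\<in>PiE I (\<lambda>_. S). (s (B i0) * (\<Sum>i\<in>I. Y i (B i)))^2)
       = (\<Sum>x\<in>S. (s x * Y i0 x)^2) * real (card S)^(card I - 1)
         + (\<Sum>i\<in>I - {i0}. (\<Sum>x\<in>S. (s x)^2) * (\<Sum>x\<in>S. (Y i x)^2) * real (card S)^(card I - 2))"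
proof -
  have products: "(\<Sum>B\<in>PiE I (\<lambda>_. S). (s (B i0))^2 * Y i (B i) * Y j (B j))
       = (if i \<noteq> j then 0
          else if i = i0 then (\<Sum>x\<in>S. (s x * Y i0 x)^2) * real (card S)^(card I - 1)
          else (\<Sum>x\<in>S. (s x)^2) * (\<Sum>x\<in>S. (Y i x)^2) * real (card S)^(card I - 2))"
    if "i \<in> I" "j \<in> I" for i j
    using S I i0 that centred by (rule sum_PiE_weighted_products)
  have "(\<Sum>B\<in>PiE I (\<lambda>_. S). (s (B i0) * (\<Sum>i\<in>I. Y i (B i)))^2)
      = (\<Sum>i\<in>I. \<Sum>j\<in>I. \<Sum>B\<in>PiE I (\<lambda>_. S). (s (B i0))^2 * Y i (B i) * Y j (B j))"
    unfolding power2_eq_square sum_product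
    by (simp add: sum.swap[where A = "PiE I (\<lambda>_. S)"] sum_distrib_left ac_simps)
  also have "\<dots> = (\<Sum>i\<in>I. if i = i0 then (\<Sum>x\<in>S. (s x * Y i0 x)^2) * real (card S)^(card I - 1)
                     else (\<Sum>x\<in>S. (s x)^2) * (\<Sum>x\<in>S. (Y i x)^2) * real (card S)^(card I - 2))"
  proof (rule sum.cong[OF refl])
    fix i assume i: "i \<in> I"
    have "(\<Sum>j\<in>I. \<Sum>B\<in>PiE I (\<lambda>_. S). (s (B i0))^2 * Y i (B i) * Y j (B j))
        = (\<Sum>j\<in>I. if j = i then (if i = i0 then (\<Sum>x\<in>S. (s x * Y i0 x)^2) * real (card S)^(card I - 1)
                     else (\<Sum>x\<in>S. (s x)^2) * (\<Sum>x\<in>S. (Y i x)^2) * real (card S)^(card I - 2)) else 0)"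
      using products[OF i] by (intro sum.cong refl) auto
    then show "(\<Sum>j\<in>I. \<Sum>B\<in>PiE I (\<lambda>_. S). (s (B i0))^2 * Y i (B i) * Y j (B j))
        = (if i = i0 then (\<Sum>x\<in>S. (s x * Y i0 x)^2) * real (card S)^(card I - 1)
           else (\<Sum>x\<in>S. (s x)^2) * (\<Sum>x\<in>S. (Y i x)^2) * real (card S)^(card I - 2))"
      using I i by simp
  qed
  also have "\<dots> = (\<Sum>x\<in>S. (s x * Y i0 x)^2) * real (card S)^(card I - 1)
        + (\<Sum>i\<in>I - {i0}. (\<Sum>x\<in>S. (s x)^2) * (\<Sum>x\<in>S. (Y i x)^2) * real (card S)^(card I - 2))"
    using I i0 by (simp add: sum.remove)
  finally show ?thesis .
qed

lemma sum_PiE_sq_weighted_centred_sum: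
  fixes s :: "'a \<Rightarrow> real" and Y :: "'i \<Rightarrow> 'a \<Rightarrow> real"
  assumes S: "finite S" and I: "finite I" and i0: "i0 \<in> I"
    and centred: "\<And>i. i \<in> I \<Longrightarrow> (\<Sum>x\<in>S. Y i x) = 0"
  shows "real (card S)^2 * (\<Sum>B\<in>PiE I (\<lambda>_. S). (s (B i0) * (\<Sum>i\<in>I. Y i (B i)))^2)
       = real (card S)^card I * (real (card S) * (\<Sum>x\<in>S. (s x * Y i0 x)^2)
                                  + (\<Sum>x\<in>S. (s x)^2) * (\<Sum>i\<in>I - {i0}. \<Sum>x\<in>S. (Y i x)^2))"
proof -
  define N where "N = real (card S)"
  have expand: "(\<Sum>B\<in>PiE I (\<lambda>_. S). (s (B i0) * (\<Sum>i\<in>I. Y i (B i)))^2)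
      = (\<Sum>x\<in>S. (s x * Y i0 x)^2) * N^(card I - 1)
        + (\<Sum>i\<in>I - {i0}. (\<Sum>x\<in>S. (s x)^2) * (\<Sum>x\<in>S. (Y i x)^2) * N^(card I - 2))"
    unfolding N_def using S I i0 centred by (rule sum_PiE_sq_weighted_centred_sum_eq)
  have "N^2 * ((\<Sum>x\<in>S. (s x * Y i0 x)^2) * N^(card I - 1))
      = N^card I * (N * (\<Sum>x\<in>S. (s x * Y i0 x)^2))"
    using card.remove[OF I i0] by (simp add: power2_eq_square)
  moreover have "N^2 * (\<Sum>i\<in>I - {i0}. (\<Sum>x\<in>S. (s x)^2) * (\<Sum>x\<in>S. (Y i x)^2) * N^(card I - 2))
      = N^card I * ((\<Sum>x\<in>S. (s x)^2) * (\<Sum>i\<in>I - {i0}. \<Sum>x\<in>S. (Y i x)^2))"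
  proof (cases "I - {i0} = {}")
    case False
    then obtain j where "j \<in> I" "j \<noteq> i0" by blast
    then have "card {i0, j} \<le> card I" using I i0 by (intro card_mono) auto
    then have "card I \<ge> 2" using \<open>j \<noteq> i0\<close> by simp
    then have "N^2 * N^(card I - 2) = N^card I" by (metis le_add_diff_inverse power_add)
    then show ?thesis
      by (simp add: sum_distrib_left sum_distrib_right mult.assoc mult.left_commute[of "N^2"])
        (simp add: ac_simps)
  next
    case True
    then show ?thesis by (simp only: sum.empty)
  qed
  ultimately show ?thesis
    unfolding expand N_def[symmetric]
    by (simp add: distrib_left distrib_right)
qed

lemma avg_PiE_sq_weighted_centred_sum_le:
  fixes s :: "'a \<Rightarrow> real" and Y :: "'i \<Rightarrow> 'a \<Rightarrow> real"
  assumes S: "finite S" "S \<noteq> {}" and I: "finite I" and i0: "i0 \<in> I"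
    and centred: "\<And>i. i \<in> I \<Longrightarrow> (\<Sum>x\<in>S. Y i x) = 0"
    and own: "(\<Sum>x\<in>S. (s x * Y i0 x)^2) \<le> real (card S) * a"
    and weight: "(\<Sum>x\<in>S. (s x)^2) = real (card S) * b"
    and others: "\<And>i. i \<in> I - {i0} \<Longrightarrow> (\<Sum>x\<in>S. (Y i x)^2) \<le> real (card S) * c i"
  shows "(\<Sum>B\<in>PiE I (\<lambda>_. S). (s (B i0) * (\<Sum>i\<in>I. Y i (B i)))^2) / real (card (PiE I (\<lambda>_. S)))
       \<le> a + b * (\<Sum>i\<in>I - {i0}. c i)"
proof -
  define N where "N = real (card S)"
  have N: "N > 0" using S unfolding N_def by (simp add: card_gt_0_iff)
  have b: "b \<ge> 0"
    using weight N sum_nonneg[of S "\<lambda>x. (s x)^2"] unfolding N_def by (simp add: zero_le_mult_iff)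
  have card_PiE: "real (card (PiE I (\<lambda>_. S))) = N^card I"
    unfolding N_def using I by (simp add: card_PiE)
  have "N^2 * (\<Sum>B\<in>PiE I (\<lambda>_. S). (s (B i0) * (\<Sum>i\<in>I. Y i (B i)))^2)
      = N^card I * (N * (\<Sum>x\<in>S. (s x * Y i0 x)^2) + N * b * (\<Sum>i\<in>I - {i0}. \<Sum>x\<in>S. (Y i x)^2))"
    using sum_PiE_sq_weighted_centred_sum[OF S(1) I i0, of Y s] centred weight
    unfolding N_def by simp
  also have "\<dots> \<le> N^card I * (N * (N * a) + N * b * (\<Sum>i\<in>I - {i0}. N * c i))"
    using own others N b unfolding N_def by (intro mult_left_mono add_mono sum_mono) auto
  also have "\<dots> = N^2 * (N^card I * (a + b * (\<Sum>i\<in>I - {i0}. c i)))"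
    by (simp add: sum_distrib_left power2_eq_square algebra_simps)
  finally show ?thesis
    unfolding card_PiE using N by (simp add: divide_le_eq mult.commute)
qed

section \<open>The block design of the restricted randomization\<close>

lemma rr_space_eq_PiE_ksubsets: "rr_space n p r = PiE {..<n} (\<lambda>_. ksubsets {1..r} p)"
  unfolding rr_space_def ksubsets_def by simp

lemma rr_space_memD:
  assumes "B \<in> rr_space n p r" "i < n"
  shows "B i \<subseteq> {1..r}" "card (B i) = p"
  using assms unfolding rr_space_def by auto

locale block_design =
  fixes w :: "nat \<Rightarrow> nat \<Rightarrow> 'v" and n r :: nat and V :: "'v set"
  assumes bij_w: "bij_betw (\<lambda>(i, j). w i j) ({..<n} \<times> {1..r}) V"
begin

abbreviation W :: "nat \<times> nat \<Rightarrow> 'v" where "W \<equiv> \<lambda>(i, j). w i j"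

lemma w_eq_iff:
  assumes "i < n" "j \<in> {1..r}" "i' < n" "j' \<in> {1..r}"
  shows "w i j = w i' j' \<longleftrightarrow> i = i' \<and> j = j'"
  using inj_onD[OF bij_betw_imp_inj_on[OF bij_w], of "(i, j)" "(i', j')"] assms by auto

lemma V_eq_image: "V = W ` ({..<n} \<times> {1..r})"
  using bij_betw_imp_surj_on[OF bij_w] by simp

lemma card_image_Sigma:
  assumes "\<And>i. F i \<subseteq> {1..r}"
  shows "card (W ` Sigma {..<n} F) = (\<Sum>i<n. card (F i))"
proof -
  have "inj_on W (Sigma {..<n} F)"
    using assms by (intro inj_on_subset[OF bij_betw_imp_inj_on[OF bij_w]]) auto
  then have "card (W ` Sigma {..<n} F) = card (Sigma {..<n} F)" by (rule card_image)
  also have "\<dots> = (\<Sum>i<n. card (F i))"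
    by (rule card_SigmaI) (auto intro: finite_subset[OF assms])
  finally show ?thesis .
qed

lemma rr_T_mem_iff:
  assumes B: "B \<in> rr_space n p r" and i: "i < n" and j: "j \<in> {1..r}"
  shows "w i j \<in> rr_T w n B \<longleftrightarrow> j \<in> B i"
proof
  assume "w i j \<in> rr_T w n B"
  then obtain i' j' where ij': "w i j = w i' j'" "i' < n" "j' \<in> B i'" unfolding rr_T_def by blast
  moreover have "j' \<in> {1..r}" using rr_space_memD(1)[OF B ij'(2)] ij'(3) by auto
  ultimately show "j \<in> B i" using w_eq_iff[OF i j] by auto
qed (use i in \<open>auto simp: rr_T_def\<close>)

lemma sgnT_rr_T:
  assumes "B \<in> rr_space n p r" "i < n" "j \<in> {1..r}"
  shows "sgnT p q (rr_T w n B) (w i j) = sgnT p q (B i) j"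
  using rr_T_mem_iff[OF assms] unfolding sgnT_def by simp

lemma rr_T_Int_image_Sigma:
  assumes B: "B \<in> rr_space n p r" and F: "\<And>i. F i \<subseteq> {1..r}"
  shows "rr_T w n B \<inter> W ` Sigma {..<n} F = W ` Sigma {..<n} (\<lambda>i. B i \<inter> F i)"
proof (intro equalityI subsetI)
  fix u assume "u \<in> rr_T w n B \<inter> W ` Sigma {..<n} F"
  then obtain i j where "i < n" "j \<in> F i" "u = w i j" "u \<in> rr_T w n B" by auto
  then show "u \<in> W ` Sigma {..<n} (\<lambda>i. B i \<inter> F i)" using rr_T_mem_iff[OF B] F by force
qed (auto simp: rr_T_def)

lemma sum_sgnT_block:
  assumes B: "B \<in> rr_space n p r" and r: "r = p + q" and i: "i < n"
  shows "(\<Sum>j\<in>{1..r}. sgnT p q (rr_T w n B) (w i j)) = 0"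
proof -
  have Bi: "B i \<subseteq> {1..r}" "card (B i) = p" using rr_space_memD[OF B i] by auto
  have "(\<Sum>j\<in>{1..r}. sgnT p q (rr_T w n B) (w i j)) = (\<Sum>j\<in>{1..r}. (if j \<in> B i then real r else 0) - real p)"
    using sgnT_rr_T[OF B i] r unfolding sgnT_def by (intro sum.cong refl) auto
  also have "\<dots> = real r * real (card ({1..r} \<inter> B i)) - real p * real r"
    by (simp add: sum_subtractf sum.If_cases Int_def)
  finally show ?thesis using Bi by (simp add: Int_absorb1)
qed

lemma sum_sgnT_union_of_blocks:
  assumes B: "B \<in> rr_space n p r" and r: "r = p + q" and \<pi>: "\<pi> \<subseteq> V"
    and blocks: "\<forall>i<n. w i ` {1..r} \<subseteq> \<pi> \<or> w i ` {1..r} \<inter> \<pi> = {}"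
  shows "(\<Sum>v\<in>\<pi>. sgnT p q (rr_T w n B) v) = 0"
proof -
  define I where "I = {i. i < n \<and> w i ` {1..r} \<subseteq> \<pi>}"
  have "\<pi> = W ` (I \<times> {1..r})"
  proof
    show "\<pi> \<subseteq> W ` (I \<times> {1..r})"
    proof
      fix v assume v: "v \<in> \<pi>"
      then obtain i j where ij: "i < n" "j \<in> {1..r}" "v = w i j" using \<pi> V_eq_image by auto
      then have "i \<in> I" using blocks v unfolding I_def by blast
      then show "v \<in> W ` (I \<times> {1..r})" using ij by force
    qed
  qed (auto simp: I_def)
  moreover have "inj_on W (I \<times> {1..r})"
    by (rule inj_on_subset[OF bij_betw_imp_inj_on[OF bij_w]]) (auto simp: I_def)
  ultimately have "(\<Sum>v\<in>\<pi>. sgnT p q (rr_T w n B) v) = (\<Sum>i\<in>I. \<Sum>j\<in>{1..r}. sgnT p q (rr_T w n B) (w i j))"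
    by (simp add: sum.reindex sum.cartesian_product case_prod_beta')
  also have "\<dots> = 0" using sum_sgnT_block[OF B r] unfolding I_def by simp
  finally show ?thesis .
qed

definition nbr_slots :: "('v \<Rightarrow> 'v \<Rightarrow> bool) \<Rightarrow> 'v \<Rightarrow> nat \<Rightarrow> nat set" where
  "nbr_slots E v i = {j \<in> {1..r}. E v (w i j)}"

lemma nbr_slots_subset: "nbr_slots E v i \<subseteq> {1..r}"
  unfolding nbr_slots_def by auto

lemma nbr_eq_image_Sigma: "nbr V E v = W ` Sigma {..<n} (nbr_slots E v)"
  unfolding nbr_def nbr_slots_def by (subst V_eq_image) auto

lemma deg_eq_sum_card_nbr_slots: "deg V E v = (\<Sum>i<n. card (nbr_slots E v i))"
  unfolding deg_def nbr_eq_image_Sigma by (rule card_image_Sigma[OF nbr_slots_subset])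

lemma card_rr_T_Int_nbr:
  assumes "B \<in> rr_space n p r"
  shows "card (rr_T w n B \<inter> nbr V E v) = (\<Sum>i<n. card (B i \<inter> nbr_slots E v i))"
  unfolding nbr_eq_image_Sigma rr_T_Int_image_Sigma[OF assms nbr_slots_subset]
  using nbr_slots_subset by (intro card_image_Sigma) auto

lemma block_of_w:
  assumes "i < n" "j \<in> {1..r}"
  shows "block_of w r n (w i j) = w i ` {1..r}"
proof -
  have "{w i' ` {1..r} | i'. i' < n \<and> w i j \<in> w i' ` {1..r}} = {w i ` {1..r}}"
    using assms w_eq_iff by fastforce
  then show ?thesis unfolding block_of_def by simp
qed

lemma card_block_of_Int_nbr:
  assumes i: "i < n" and j: "j \<in> {1..r}"
  shows "card (block_of w r n (w i j) \<inter> nbr V E (w i j)) = card (nbr_slots E (w i j) i)"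
proof -
  define F where "F = (\<lambda>i'. if i' = i then nbr_slots E (w i j) i else {})"
  have "block_of w r n (w i j) \<inter> nbr V E (w i j) = W ` Sigma {..<n} F"
  proof (intro equalityI subsetI)
    fix u assume "u \<in> block_of w r n (w i j) \<inter> nbr V E (w i j)"
    then obtain j' i'' j'' where "j' \<in> {1..r}" "u = w i j'" "i'' < n" "j'' \<in> nbr_slots E (w i j) i''"
      "u = w i'' j''"
      unfolding block_of_w[OF i j] nbr_eq_image_Sigma by auto
    moreover from this have "i'' = i" "j'' = j'" using w_eq_iff[OF i] nbr_slots_subset by blast+
    ultimately show "u \<in> W ` Sigma {..<n} F" unfolding F_def using i by force
  next
    fix u assume "u \<in> W ` Sigma {..<n} F"
    then show "u \<in> block_of w r n (w i j) \<inter> nbr V E (w i j)"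
      unfolding block_of_w[OF i j] nbr_eq_image_Sigma F_def using nbr_slots_subset
      by (fastforce split: if_splits)
  qed
  moreover have "(\<Sum>i'<n. card (F i')) = card (nbr_slots E (w i j) i)"
    using i unfolding F_def by (simp add: if_distrib cong: if_cong)
  ultimately show ?thesis
    using card_image_Sigma[of F] nbr_slots_subset unfolding F_def by auto
qed

end

section \<open>Second moment of the treated fraction of a neighbourhood\<close>

definition nbr_frac :: "'v set \<Rightarrow> ('v \<Rightarrow> 'v \<Rightarrow> bool) \<Rightarrow> 'v set \<Rightarrow> 'v \<Rightarrow> real" where
  "nbr_frac V E T v = real (card (T \<inter> nbr V E v)) / real (deg V E v)"

lemma sqrt_div_sq_le:
  fixes x k a d :: real
  assumes d: "d > 0" and k: "k \<ge> 0" and a: "a \<ge> 0" and x: "x \<le> k^2 + 4 * a^2 * d"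
  shows "sqrt (x / d^2) \<le> 4 * a / sqrt d + k / d"
proof -
  have "(k + 2 * a * sqrt d)^2 = k^2 + 4 * a * k * sqrt d + 4 * a^2 * (sqrt d * sqrt d)"
    by (simp add: power2_eq_square algebra_simps)
  also have "sqrt d * sqrt d = d" using d by simp
  finally have "(k + 2 * a * sqrt d)^2 = k^2 + 4 * a * k * sqrt d + 4 * a^2 * d" .
  moreover have "0 \<le> 4 * a * k * sqrt d" using d k a by simp
  ultimately have "x \<le> (k + 2 * a * sqrt d)^2" using x by linarith
  then have "sqrt x \<le> sqrt ((k + 2 * a * sqrt d)^2)" by (rule real_sqrt_le_mono)
  also have "\<dots> = k + 2 * a * sqrt d" using k a d by simp
  finally have "sqrt x \<le> k + 2 * a * sqrt d" .
  then have "sqrt x / d \<le> (k + 2 * a * sqrt d) / d"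
    using d by (simp add: divide_right_mono)
  also have "\<dots> = k / d + 2 * a / sqrt d"
    using d by (simp add: field_simps)
  also have "\<dots> \<le> 4 * a / sqrt d + k / d" using a d by (simp add: divide_right_mono)
  finally show ?thesis using d by (simp add: real_sqrt_divide)
qed

context block_design
begin

lemma sgnT_mult_nbr_frac_dev:
  assumes B: "B \<in> rr_space n p r" and i0: "i0 < n" and j0: "j0 \<in> {1..r}"
    and d: "deg V E (w i0 j0) > 0"
  shows "sgnT p q (rr_T w n B) (w i0 j0) * (nbr_frac V E (rr_T w n B) (w i0 j0) - real p / real r)
       = sgnT p q (B i0) j0
         * (\<Sum>i<n. real (card (B i \<inter> nbr_slots E (w i0 j0) i))
                    - real (card (nbr_slots E (w i0 j0) i)) * real p / real r)
         / real (deg V E (w i0 j0))"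
proof -
  define D where "D = real (deg V E (w i0 j0))"
  have D: "D = (\<Sum>i<n. real (card (nbr_slots E (w i0 j0) i)))"
    unfolding D_def deg_eq_sum_card_nbr_slots by simp
  have "(\<Sum>i<n. real (card (B i \<inter> nbr_slots E (w i0 j0) i))
               - real (card (nbr_slots E (w i0 j0) i)) * real p / real r)
      = (\<Sum>i<n. real (card (B i \<inter> nbr_slots E (w i0 j0) i))) - D * real p / real r"
    unfolding D by (simp add: sum_subtractf sum_distrib_right sum_divide_distrib)
  moreover have "nbr_frac V E (rr_T w n B) (w i0 j0) = (\<Sum>i<n. real (card (B i \<inter> nbr_slots E (w i0 j0) i))) / D"
    unfolding nbr_frac_def card_rr_T_Int_nbr[OF B] D_def by simp
  moreover have "D > 0" using d unfolding D_def by simp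
  ultimately have "nbr_frac V E (rr_T w n B) (w i0 j0) - real p / real r
      = (\<Sum>i<n. real (card (B i \<inter> nbr_slots E (w i0 j0) i))
                - real (card (nbr_slots E (w i0 j0) i)) * real p / real r) / D"
    by (simp add: diff_divide_distrib)
  then show ?thesis unfolding sgnT_rr_T[OF B i0 j0] D_def[symmetric] by simp
qed

lemma rr_expect_sq_vertex_dev_eq:
  assumes i0: "i0 < n" and j0: "j0 \<in> {1..r}" and d: "deg V E (w i0 j0) > 0"
  shows "real (deg V E (w i0 j0))^2
           * rr_expect n p r (\<lambda>B. (sgnT p q (rr_T w n B) (w i0 j0)
                                     * (nbr_frac V E (rr_T w n B) (w i0 j0) - real p / real r))^2)
       = (\<Sum>B\<in>PiE {..<n} (\<lambda>_. ksubsets {1..r} p).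
            (sgnT p q (B i0) j0 * (\<Sum>i\<in>{..<n}. real (card (B i \<inter> nbr_slots E (w i0 j0) i))
                                 - real (card (nbr_slots E (w i0 j0) i)) * real p / real r))^2)
         / real (card (PiE {..<n} (\<lambda>_. ksubsets {1..r} p)))"
  unfolding rr_expect_def rr_space_eq_PiE_ksubsets[symmetric]
  using sgnT_mult_nbr_frac_dev[OF _ i0 j0 d, of _ p q] d
  by (simp add: power_divide sum_divide_distrib[symmetric])

lemma rr_expect_sq_vertex_dev_le:
  assumes r: "r = p + q" and p0: "p > 0" and q0: "q > 0" and i0: "i0 < n" and j0: "j0 \<in> {1..r}"
    and irr: "\<not> E (w i0 j0) (w i0 j0)" and d: "deg V E (w i0 j0) > 0"
  shows "real (deg V E (w i0 j0))^2
           * rr_expect n p r (\<lambda>B. (sgnT p q (rr_T w n B) (w i0 j0)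
                                     * (nbr_frac V E (rr_T w n B) (w i0 j0) - real p / real r))^2)
       \<le> real (card (nbr_slots E (w i0 j0) i0))^2
           + 4 * (real p * real q / real r)^2 * real (deg V E (w i0 j0))"
proof -
  define D where "D = real (deg V E (w i0 j0))"
  define k where "k = (\<lambda>i. real (card (nbr_slots E (w i0 j0) i)))"
  define S where "S = ksubsets {1..r} p"
  define s where "s = (\<lambda>x. sgnT p q x j0)"
  define Y where "Y = (\<lambda>i x. real (card (x \<inter> nbr_slots E (w i0 j0) i)) - k i * real p / real r)"
  define c where "c = real p * real q / real r"
  have D: "D = (\<Sum>i<n. k i)" unfolding D_def k_def deg_eq_sum_card_nbr_slots by simp
  have finS: "finite S" "S \<noteq> {}" and cardS: "card S = (p + q) choose p"
    using r card_ksubsets[of "{1..r}" p] finite_ksubsets[of "{1..r}" p]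
    unfolding S_def by (auto simp: card_eq_0_iff)
  have A: "nbr_slots E (w i0 j0) i \<subseteq> {1..r}" for i by (rule nbr_slots_subset)
  have A0: "nbr_slots E (w i0 j0) i0 \<subseteq> {1..r} - {j0}" using irr unfolding nbr_slots_def by auto
  have "D^2 * rr_expect n p r (\<lambda>B. (sgnT p q (rr_T w n B) (w i0 j0)
                                     * (nbr_frac V E (rr_T w n B) (w i0 j0) - real p / real r))^2)
      = (\<Sum>B\<in>PiE {..<n} (\<lambda>_. S). (s (B i0) * (\<Sum>i\<in>{..<n}. Y i (B i)))^2) / real (card (PiE {..<n} (\<lambda>_. S)))"
    unfolding D_def S_def s_def Y_def k_def by (rule rr_expect_sq_vertex_dev_eq[OF i0 j0 d])
  also have "\<dots> \<le> (k i0^2 + 4 * k i0 * c^2) + real p * real q * (\<Sum>i\<in>{..<n} - {i0}. k i * real p * real q / real r^2)"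
  proof (rule avg_PiE_sq_weighted_centred_sum_le[OF finS finite_lessThan])
    show "i0 \<in> {..<n}" using i0 by simp
    show "(\<Sum>x\<in>S. Y i x) = 0" for i
      using sum_card_Int_ksubsets_centred[OF _ A] r p0 unfolding S_def Y_def k_def by simp
    show "(\<Sum>x\<in>S. (s x * Y i0 x)^2) \<le> real (card S) * (k i0^2 + 4 * k i0 * c^2)"
      using sum_sq_sgnT_card_Int_ksubsets_le[OF _ j0 A0 _ p0 q0] r cardS
      unfolding S_def s_def Y_def k_def c_def by (simp add: power_mult_distrib)
    show "(\<Sum>x\<in>S. (s x)^2) = real (card S) * (real p * real q)"
      using sum_sq_sgnT_ksubsets[OF _ j0] r cardS unfolding S_def s_def by simp
    show "(\<Sum>x\<in>S. (Y i x)^2) \<le> real (card S) * (k i * real p * real q / real r^2)" for i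
      using sum_sq_card_Int_ksubsets_centred_le[OF _ A] r p0 cardS unfolding S_def Y_def k_def by simp
  qed
  also have "\<dots> = k i0^2 + c^2 * (4 * k i0 + (\<Sum>i\<in>{..<n} - {i0}. k i))"
  proof -
    have "real p * real q * (k i * real p * real q / real r^2) = c^2 * k i" for i
      unfolding c_def by (simp add: power2_eq_square mult_ac)
    then show ?thesis by (simp add: sum_distrib_left algebra_simps)
  qed
  also have "\<dots> \<le> k i0^2 + c^2 * (4 * D)"
  proof -
    have "D = k i0 + (\<Sum>i\<in>{..<n} - {i0}. k i)" unfolding D using i0 by (simp add: sum.remove)
    moreover have "0 \<le> (\<Sum>i\<in>{..<n} - {i0}. k i)" unfolding k_def by (simp add: sum_nonneg)
    ultimately show ?thesis by (intro add_left_mono mult_left_mono) auto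
  qed
  finally show ?thesis unfolding D_def k_def c_def by (simp add: algebra_simps)
qed

lemma sqrt_rr_expect_sq_vertex_dev_le:
  assumes r: "r = p + q" and p0: "p > 0" and q0: "q > 0" and v: "v \<in> V"
    and irr: "\<not> E v v" and d: "deg V E v > 0"
  shows "sqrt (rr_expect n p r (\<lambda>B. (sgnT p q (rr_T w n B) v * (nbr_frac V E (rr_T w n B) v - real p / real r))^2))
       \<le> 4 * (real p * real q / real r) / sqrt (real (deg V E v))
           + real (card (block_of w r n v \<inter> nbr V E v)) / real (deg V E v)"
proof -
  obtain i0 j0 where ij: "i0 < n" "j0 \<in> {1..r}" "v = w i0 j0" using v V_eq_image by auto
  define x where "x = real (deg V E v)^2
           * rr_expect n p r (\<lambda>B. (sgnT p q (rr_T w n B) v * (nbr_frac V E (rr_T w n B) v - real p / real r))^2)"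
  have "x \<le> real (card (block_of w r n v \<inter> nbr V E v))^2
           + 4 * (real p * real q / real r)^2 * real (deg V E v)"
    using rr_expect_sq_vertex_dev_le[OF r p0 q0 ij(1,2)] irr d
    unfolding x_def ij(3) card_block_of_Int_nbr[OF ij(1,2)] by simp
  then have "sqrt (x / real (deg V E v)^2)
      \<le> 4 * (real p * real q / real r) / sqrt (real (deg V E v))
           + real (card (block_of w r n v \<inter> nbr V E v)) / real (deg V E v)"
    using d by (intro sqrt_div_sq_le) auto
  then show ?thesis unfolding x_def using d by simp
qed

end

section \<open>Lipschitz test functions against balanced signs\<close>

lemma abs_sum_mult_lipschitz_le:
  fixes s g x :: "'a \<Rightarrow> real"
  assumes P: "finite P" and s0: "(\<Sum>v\<in>P. s v) = 0" and K: "K \<ge> 0"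
    and lip: "\<And>v v'. v \<in> P \<Longrightarrow> v' \<in> P \<Longrightarrow> \<bar>g v - g v'\<bar> \<le> K * \<bar>x v - x v'\<bar>"
  shows "\<bar>\<Sum>v\<in>P. s v * g v\<bar> \<le> K * (\<Sum>v\<in>P. \<bar>s v\<bar> * \<bar>x v - c\<bar>)"
proof (cases "P = {}")
  case False
  define h where "h = (\<lambda>v. g v + K * \<bar>x v - c\<bar>)"
  have "Min (h ` P) \<in> h ` P" using P False by (intro Min_in) auto
  then obtain v0 where v0: "v0 \<in> P" "h v0 = Min (h ` P)" by (metis imageE)
  \<comment> \<open>Replacing \<open>g\<close> by \<open>g - h v0\<close> is free since \<open>s\<close> sums to zero, and \<open>|g v - h v0| \<le> K |x v - c|\<close>.\<close>
  have g_close: "\<bar>g v - h v0\<bar> \<le> K * \<bar>x v - c\<bar>" if v: "v \<in> P" for v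
  proof -
    have "h v0 \<le> h v" using v0(2) P v by simp
    moreover have "g v - g v0 \<le> K * (\<bar>x v - c\<bar> + \<bar>x v0 - c\<bar>)"
      using lip[OF v v0(1)] K by (smt (verit) abs_triangle_ineq4 mult_left_mono)
    ultimately show ?thesis unfolding h_def by (simp add: algebra_simps)
  qed
  have "(\<Sum>v\<in>P. s v * g v) = (\<Sum>v\<in>P. s v * (g v - h v0))"
    using s0 by (simp add: right_diff_distrib sum_subtractf sum_distrib_right[symmetric])
  then have "\<bar>\<Sum>v\<in>P. s v * g v\<bar> \<le> (\<Sum>v\<in>P. \<bar>s v * (g v - h v0)\<bar>)"
    by (simp only: sum_abs)
  also have "\<dots> = (\<Sum>v\<in>P. \<bar>s v\<bar> * \<bar>g v - h v0\<bar>)" by (simp add: abs_mult)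
  also have "\<dots> \<le> (\<Sum>v\<in>P. \<bar>s v\<bar> * (K * \<bar>x v - c\<bar>))"
    using g_close by (intro sum_mono mult_left_mono) auto
  finally show ?thesis by (simp add: sum_distrib_left algebra_simps)
qed simp

lemma nbr_subset: "nbr V E v \<subseteq> V"
  unfolding nbr_def by auto

lemma fst_plus_snd_dvec:
  assumes "finite V"
  shows "fst (dvec V E T v) + snd (dvec V E T v) = deg V E v"
proof -
  have "finite (nbr V E v)" using assms nbr_subset by (rule finite_subset[rotated])
  then show ?thesis
    unfolding dvec_def deg_def using card_Int_Diff[of "nbr V E v" T] by (simp add: Int_commute)
qed

lemma wdist_dvec:
  assumes "finite V"
  shows "wdist K (dvec V E T v) (dvec V E T v') = K * \<bar>nbr_frac V E T v - nbr_frac V E T v'\<bar>"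
proof -
  have "real (fst (dvec V E T u)) / (real (fst (dvec V E T u)) + real (snd (dvec V E T u)))
      = nbr_frac V E T u" for u
    using fst_plus_snd_dvec[OF assms, of E T u] unfolding nbr_frac_def
    by (metis of_nat_add dvec_def fst_conv)
  then show ?thesis unfolding wdist_def by simp
qed

lemma dvec_in_Bset:
  assumes "finite V" "v \<in> \<pi>"
  shows "dvec V E T v \<in> Bset V E \<pi>"
  using fst_plus_snd_dvec[OF assms(1), of E T v] assms(2) unfolding Bset_def
  by (cases "dvec V E T v") auto

lemma finite_Bset:
  assumes "finite V" "\<pi> \<subseteq> V"
  shows "finite (Bset V E \<pi>)"
proof (rule finite_subset)
  show "Bset V E \<pi> \<subseteq> {..card V} \<times> {..card V}"
  proof
    fix u assume "u \<in> Bset V E \<pi>"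
    then obtain a b v where u: "u = (a, b)" "v \<in> \<pi>" "a + b = deg V E v" unfolding Bset_def by auto
    have "deg V E v \<le> card V" unfolding deg_def using assms(1) nbr_subset by (rule card_mono)
    then show "u \<in> {..card V} \<times> {..card V}" using u by auto
  qed
qed simp

lemma sum_mult_Dpi:
  assumes V: "finite V" and \<pi>: "\<pi> \<subseteq> V"
  shows "(\<Sum>u\<in>Bset V E \<pi>. g u * Dpi V E p q n \<pi> T u)
       = 1 / (real p * real q * real n) * (\<Sum>v\<in>\<pi>. sgnT p q T v * g (dvec V E T v))"
proof -
  have "(\<Sum>u\<in>Bset V E \<pi>. g u * Dpi V E p q n \<pi> T u)
      = 1 / (real p * real q * real n)
        * (\<Sum>u\<in>Bset V E \<pi>. g u * (\<Sum>v\<in>{v \<in> \<pi>. dvec V E T v = u}. sgnT p q T v))"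
    unfolding Dpi_def by (simp add: sum_distrib_left mult_ac)
  also have "(\<Sum>u\<in>Bset V E \<pi>. g u * (\<Sum>v\<in>{v \<in> \<pi>. dvec V E T v = u}. sgnT p q T v))
      = (\<Sum>u\<in>Bset V E \<pi>. \<Sum>v\<in>{v \<in> \<pi>. dvec V E T v = u}. sgnT p q T v * g (dvec V E T v))"
    by (simp add: sum_distrib_left mult.commute)
  also have "\<dots> = (\<Sum>v\<in>\<pi>. sgnT p q T v * g (dvec V E T v))"
    using dvec_in_Bset[OF V] finite_subset[OF \<pi> V] finite_Bset[OF V \<pi>]
    by (intro sum.group) auto
  finally show ?thesis .
qed

lemma abs_sum_sgnT_lipschitz_le:
  fixes g :: "nat \<times> nat \<Rightarrow> real"
  assumes V: "finite V" and \<pi>: "\<pi> \<subseteq> V" and s0: "(\<Sum>v\<in>\<pi>. sgnT p q T v) = 0" and K: "K \<ge> 0"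
    and lip: "\<forall>u\<in>Bset V E \<pi>. \<forall>u'\<in>Bset V E \<pi>. \<bar>g u - g u'\<bar> \<le> wdist K u u'"
  shows "\<bar>1 / (real p * real q * real n) * (\<Sum>v\<in>\<pi>. sgnT p q T v * g (dvec V E T v))\<bar>
       \<le> K / (real p * real q * real n) * (\<Sum>v\<in>\<pi>. \<bar>sgnT p q T v\<bar> * \<bar>nbr_frac V E T v - c\<bar>)"
proof -
  have "\<bar>\<Sum>v\<in>\<pi>. sgnT p q T v * g (dvec V E T v)\<bar>
      \<le> K * (\<Sum>v\<in>\<pi>. \<bar>sgnT p q T v\<bar> * \<bar>nbr_frac V E T v - c\<bar>)"
    using finite_subset[OF \<pi> V] s0 K
  proof (rule abs_sum_mult_lipschitz_le)
    fix v v' assume "v \<in> \<pi>" "v' \<in> \<pi>"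
    then show "\<bar>g (dvec V E T v) - g (dvec V E T v')\<bar> \<le> K * \<bar>nbr_frac V E T v - nbr_frac V E T v'\<bar>"
      using lip dvec_in_Bset[OF V] wdist_dvec[OF V] by metis
  qed
  then show ?thesis by (simp add: abs_mult divide_right_mono)
qed

lemma wnorm_Dpi_le:
  assumes V: "finite V" and \<pi>: "\<pi> \<subseteq> V" and s0: "(\<Sum>v\<in>\<pi>. sgnT p q T v) = 0" and K: "K \<ge> 0"
  shows "wnorm V E K \<pi> (Dpi V E p q n \<pi> T)
       \<le> K / (real p * real q * real n) * (\<Sum>v\<in>\<pi>. \<bar>sgnT p q T v\<bar> * \<bar>nbr_frac V E T v - c\<bar>)"
    and "0 \<le> wnorm V E K \<pi> (Dpi V E p q n \<pi> T)"
proof -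
  define M where "M = K / (real p * real q * real n) * (\<Sum>v\<in>\<pi>. \<bar>sgnT p q T v\<bar> * \<bar>nbr_frac V E T v - c\<bar>)"
  define Vals where "Vals = {\<bar>\<Sum>u\<in>Bset V E \<pi>. g u * Dpi V E p q n \<pi> T u\<bar> | g :: nat \<times> nat \<Rightarrow> real.
            \<forall>u\<in>Bset V E \<pi>. \<forall>u'\<in>Bset V E \<pi>. \<bar>g u - g u'\<bar> \<le> wdist K u u'}"
  have upper: "y \<le> M" if "y \<in> Vals" for y
    using that abs_sum_sgnT_lipschitz_le[OF V \<pi> s0 K]
    unfolding Vals_def M_def sum_mult_Dpi[OF V \<pi>] by blast
  have zero: "0 \<in> Vals"
    unfolding Vals_def using K by (intro CollectI exI[where x = "\<lambda>_. 0"]) (auto simp: wdist_def)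
  have "bdd_above Vals" using upper by (rule bdd_aboveI)
  moreover have "wnorm V E K \<pi> (Dpi V E p q n \<pi> T) = Sup Vals" unfolding wnorm_def Vals_def by simp
  ultimately show "wnorm V E K \<pi> (Dpi V E p q n \<pi> T) \<le> M" and "0 \<le> wnorm V E K \<pi> (Dpi V E p q n \<pi> T)"
    using zero upper by (auto intro: cSup_least cSup_upper)
qed

lemma L2_set_sum_le:
  assumes "finite I"
  shows "L2_set (\<lambda>x. \<Sum>i\<in>I. f i x) A \<le> (\<Sum>i\<in>I. L2_set (f i) A)"
  using assms
proof (induction I rule: finite_induct)
  case (insert a I)
  have "L2_set (\<lambda>x. \<Sum>i\<in>insert a I. f i x) A = L2_set (\<lambda>x. f a x + (\<Sum>i\<in>I. f i x)) A"
    using insert by simp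
  also have "\<dots> \<le> L2_set (f a) A + L2_set (\<lambda>x. \<Sum>i\<in>I. f i x) A" by (rule L2_set_triangle_ineq)
  also have "\<dots> \<le> L2_set (f a) A + (\<Sum>i\<in>I. L2_set (f i) A)" using insert by simp
  finally show ?case using insert by simp
qed (simp add: L2_set_0')

lemma sqrt_avg_sq_sum_le:
  fixes f :: "'i \<Rightarrow> 'a \<Rightarrow> real"
  assumes "finite I"
  shows "sqrt ((\<Sum>x\<in>A. (\<Sum>i\<in>I. f i x)^2) / real (card A))
       \<le> (\<Sum>i\<in>I. sqrt ((\<Sum>x\<in>A. (f i x)^2) / real (card A)))"
proof -
  have avg: "sqrt ((\<Sum>x\<in>A. (F x)^2) / real (card A)) = L2_set F A / sqrt (real (card A))"
    for F :: "'a \<Rightarrow> real"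
    unfolding L2_set_def by (simp add: real_sqrt_divide)
  have "L2_set (\<lambda>x. \<Sum>i\<in>I. f i x) A / sqrt (real (card A)) \<le> (\<Sum>i\<in>I. L2_set (f i) A) / sqrt (real (card A))"
    using L2_set_sum_le[OF assms] by (rule divide_right_mono) simp
  then show ?thesis unfolding avg by (simp add: sum_divide_distrib)
qed

lemma rr_expect_mono:
  assumes "\<And>B. B \<in> rr_space n p r \<Longrightarrow> f B \<le> g B"
  shows "rr_expect n p r f \<le> rr_expect n p r g"
  unfolding rr_expect_def using assms by (intro divide_right_mono sum_mono) auto

lemma sqrt_rr_expect_sq_mono:
  assumes "\<And>B. B \<in> rr_space n p r \<Longrightarrow> \<bar>f B\<bar> \<le> g B"
  shows "sqrt (rr_expect n p r (\<lambda>B. (f B)^2)) \<le> sqrt (rr_expect n p r (\<lambda>B. (g B)^2))"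
proof (intro real_sqrt_le_mono rr_expect_mono)
  fix B assume "B \<in> rr_space n p r"
  then have "\<bar>f B\<bar>^2 \<le> (g B)^2" using assms by (intro power_mono) auto
  then show "(f B)^2 \<le> (g B)^2" by simp
qed

lemma sum_partition_on:
  assumes "partition_on V Parts" "finite V"
  shows "(\<Sum>\<pi>\<in>Parts. \<Sum>v\<in>\<pi>. h v) = (\<Sum>v\<in>V. h v)"
proof -
  have fin: "finite \<pi>" if "\<pi> \<in> Parts" for \<pi>
    using that assms partition_onD1[OF assms(1)] by (metis Sup_upper finite_subset)
  have "(\<Sum>v\<in>\<Union>Parts. h v) = (\<Sum>\<pi>\<in>Parts. \<Sum>v\<in>\<pi>. h v)"
    using fin partition_onD2[OF assms(1)] finite_elements[OF assms(2,1)]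
    by (subst sum.Union_disjoint) (auto simp: disjoint_def)
  then show ?thesis using partition_onD1[OF assms(1)] by simp
qed

lemma part_of_eq:
  assumes "partition_on V Parts" "\<pi> \<in> Parts" "v \<in> \<pi>"
  shows "part_of Parts v = \<pi>"
  unfolding part_of_def
proof (rule the_equality)
  fix \<pi>' assume "\<pi>' \<in> Parts \<and> v \<in> \<pi>'"
  then show "\<pi>' = \<pi>" using assms partition_onD2[OF assms(1)] unfolding disjoint_def by blast
qed (use assms in simp)

lemma partition_on_subset_or_disjoint:
  assumes "partition_on V Parts" "\<pi> \<in> Parts" "\<pi>' \<in> Parts" "X \<subseteq> \<pi>'"
  shows "X \<subseteq> \<pi> \<or> X \<inter> \<pi> = {}"
  using assms partition_onD2[OF assms(1)] unfolding disjoint_def by blast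

locale rr_experiment = block_design w n r V
  for w :: "nat \<Rightarrow> nat \<Rightarrow> 'v" and n r :: nat and V :: "'v set" +
  fixes E :: "'v \<Rightarrow> 'v \<Rightarrow> bool" and Parts :: "'v set set" and p q :: nat and K :: real
  assumes r_eq: "r = p + q" and p_pos: "p > 0" and q_pos: "q > 0" and K_nonneg: "K \<ge> 0"
    and finite_V: "finite V" and irrefl: "\<And>v. \<not> E v v" and deg_pos: "\<And>v. v \<in> V \<Longrightarrow> deg V E v > 0"
    and partition: "partition_on V Parts"
    and blocks_in_parts: "\<And>i. i < n \<Longrightarrow> \<exists>\<pi>\<in>Parts. w i ` {1..r} \<subseteq> \<pi>"
begin

definition dev_bound :: "(nat \<Rightarrow> nat set) \<Rightarrow> real" where
  "dev_bound B = K / (real p * real q * real n)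
     * (\<Sum>v\<in>V. \<bar>sgnT p q (rr_T w n B) v\<bar> * \<bar>nbr_frac V E (rr_T w n B) v - real p / real r\<bar>)"

lemma part_subset: "\<pi> \<in> Parts \<Longrightarrow> \<pi> \<subseteq> V"
  using partition_onD1[OF partition] by blast

lemma sum_sgnT_part:
  assumes "B \<in> rr_space n p r" "\<pi> \<in> Parts"
  shows "(\<Sum>v\<in>\<pi>. sgnT p q (rr_T w n B) v) = 0"
  using assms blocks_in_parts partition_on_subset_or_disjoint[OF partition]
  by (intro sum_sgnT_union_of_blocks[OF _ r_eq part_subset]) blast+

lemma dev_bound_eq_sum_parts:
  "dev_bound B = (\<Sum>\<pi>\<in>Parts. K / (real p * real q * real n)
     * (\<Sum>v\<in>\<pi>. \<bar>sgnT p q (rr_T w n B) v\<bar> * \<bar>nbr_frac V E (rr_T w n B) v - real p / real r\<bar>))"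
  unfolding dev_bound_def sum_partition_on[OF partition finite_V, symmetric]
  by (simp add: sum_distrib_left)

lemma sum_wnorm_le_dev_bound:
  assumes B: "B \<in> rr_space n p r"
  shows "\<bar>\<Sum>\<pi>\<in>Parts. wnorm V E K \<pi> (Dpi V E p q n \<pi> (rr_T w n B))\<bar> \<le> dev_bound B"
proof -
  note wnorm = wnorm_Dpi_le[OF finite_V part_subset sum_sgnT_part[OF B] K_nonneg]
  have "0 \<le> (\<Sum>\<pi>\<in>Parts. wnorm V E K \<pi> (Dpi V E p q n \<pi> (rr_T w n B)))"
    using wnorm(2) by (intro sum_nonneg) auto
  moreover have "(\<Sum>\<pi>\<in>Parts. wnorm V E K \<pi> (Dpi V E p q n \<pi> (rr_T w n B))) \<le> dev_bound B"
    unfolding dev_bound_eq_sum_parts using wnorm(1) by (intro sum_mono) auto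
  ultimately show ?thesis by simp
qed

lemma abs_xi_le_dev_bound:
  assumes B: "B \<in> rr_space n p r"
    and lip: "\<forall>\<pi>\<in>Parts. \<forall>u\<in>Bset V E \<pi>. \<forall>u'\<in>Bset V E \<pi>. \<bar>f \<pi> u - f \<pi> u'\<bar> \<le> wdist K u u'"
  shows "\<bar>xi V E Parts f p q n (rr_T w n B)\<bar> \<le> dev_bound B"
proof -
  define T where "T = rr_T w n B"
  have "xi V E Parts f p q n T
      = (\<Sum>\<pi>\<in>Parts. 1 / (real p * real q * real n) * (\<Sum>v\<in>\<pi>. sgnT p q T v * f \<pi> (dvec V E T v)))"
    unfolding xi_def dvec_def sum_partition_on[OF partition finite_V, symmetric] sum_distrib_left
    using part_of_eq[OF partition] by (intro sum.cong refl) auto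
  also have "\<bar>\<dots>\<bar> \<le> dev_bound B"
    unfolding dev_bound_eq_sum_parts T_def
    using abs_sum_sgnT_lipschitz_le[OF finite_V part_subset sum_sgnT_part[OF B] K_nonneg] lip
    by (intro order_trans[OF sum_abs] sum_mono) blast
  finally show ?thesis unfolding T_def .
qed

lemma sqrt_rr_expect_sq_dev_bound_le:
  "sqrt (rr_expect n p r (\<lambda>B. (dev_bound B)^2))
     \<le> 1 / (real r * real n) * (\<Sum>v\<in>V. 4 * K / sqrt (real (deg V E v)))
       + K / (real p * real q * real n) *
           (\<Sum>v\<in>V. real (card (block_of w r n v \<inter> nbr V E v)) / real (deg V E v))"
proof -
  define c where "c = K / (real p * real q * real n)"
  define dev where "dev = (\<lambda>v B. sgnT p q (rr_T w n B) v * (nbr_frac V E (rr_T w n B) v - real p / real r))"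
  have c: "c \<ge> 0" unfolding c_def using K_nonneg by simp
  have "sqrt (rr_expect n p r (\<lambda>B. (dev_bound B)^2))
      \<le> (\<Sum>v\<in>V. sqrt (rr_expect n p r (\<lambda>B. (c * \<bar>dev v B\<bar>)^2)))"
    unfolding rr_expect_def dev_bound_def c_def[symmetric] dev_def sum_distrib_left abs_mult[symmetric]
    by (rule sqrt_avg_sq_sum_le[OF finite_V])
  also have "\<dots> = (\<Sum>v\<in>V. c * sqrt (rr_expect n p r (\<lambda>B. (dev v B)^2)))"
  proof (rule sum.cong[OF refl])
    fix v
    have "rr_expect n p r (\<lambda>B. (c * \<bar>dev v B\<bar>)^2) = c^2 * rr_expect n p r (\<lambda>B. (dev v B)^2)"
      unfolding rr_expect_def by (simp add: power_mult_distrib sum_distrib_left)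
    then show "sqrt (rr_expect n p r (\<lambda>B. (c * \<bar>dev v B\<bar>)^2)) = c * sqrt (rr_expect n p r (\<lambda>B. (dev v B)^2))"
      using c by (simp add: real_sqrt_mult)
  qed
  also have "\<dots> \<le> (\<Sum>v\<in>V. c * (4 * (real p * real q / real r) / sqrt (real (deg V E v))
                     + real (card (block_of w r n v \<inter> nbr V E v)) / real (deg V E v)))"
    unfolding dev_def using sqrt_rr_expect_sq_vertex_dev_le[OF r_eq p_pos q_pos _ irrefl deg_pos] c
    by (intro sum_mono mult_left_mono) auto
  also have "\<dots> = 1 / (real r * real n) * (\<Sum>v\<in>V. 4 * K / sqrt (real (deg V E v)))
       + c * (\<Sum>v\<in>V. real (card (block_of w r n v \<inter> nbr V E v)) / real (deg V E v))"
    unfolding c_def using p_pos q_pos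
    by (simp add: distrib_left sum.distrib sum_distrib_left sum_divide_distrib mult_ac)
  finally show ?thesis unfolding c_def .
qed

end

theorem mainTheorem7:
  fixes V :: "'v set" and E :: "'v \<Rightarrow> 'v \<Rightarrow> bool"
    and n p q r :: nat and K :: real
    and Parts :: "'v set set" and f :: "'v set \<Rightarrow> nat \<times> nat \<Rightarrow> real"
    and w :: "nat \<Rightarrow> nat \<Rightarrow> 'v"
  assumes n_pos: "n > 0" and p_pos: "p > 0" and q_pos: "q > 0" and r_def: "r = p + q"
    and finV: "finite V"
    and E_sym: "\<forall>u v. E u v \<longrightarrow> E v u" and E_irrefl: "\<forall>v. \<not> E v v"
    and cardV: "card V = r * n"
    and no_isolated: "\<forall>v\<in>V. deg V E v > 0"
    and Pi_part: "partition_on V Parts"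
    and Pi_div: "\<forall>\<pi>\<in>Parts. r dvd card \<pi>"
    and f_empty: "\<forall>v\<in>V. f (part_of Parts v) (0, deg V E v) = 0"
    and K_pos: "K > 0"
    and w_bij: "bij_betw (\<lambda>(i, j). w i j) ({..<n} \<times> {1..r}) V"
    and blocks_in_parts: "\<forall>i<n. \<exists>\<pi>\<in>Parts. w i ` {1..r} \<subseteq> \<pi>"
  shows "sqrt (rr_expect n p r
            (\<lambda>B. (\<Sum>\<pi>\<in>Parts. wnorm V E K \<pi> (Dpi V E p q n \<pi> (rr_T w n B))) ^ 2))
         \<le> 1 / (real r * real n) * (\<Sum>v\<in>V. 4 * K / sqrt (real (deg V E v)))
           + K / (real p * real q * real n) *
               (\<Sum>v\<in>V. real (card (block_of w r n v \<inter> nbr V E v)) / real (deg V E v))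
       \<and> ((\<forall>\<pi>\<in>Parts. \<forall>u\<in>Bset V E \<pi>. \<forall>u'\<in>Bset V E \<pi>. \<bar>f \<pi> u - f \<pi> u'\<bar> \<le> wdist K u u')
          \<longrightarrow> sqrt (rr_expect n p r (\<lambda>B. (xi V E Parts f p q n (rr_T w n B)) ^ 2))
              \<le> 1 / (real r * real n) * (\<Sum>v\<in>V. 4 * K / sqrt (real (deg V E v)))
                + K / (real p * real q * real n) *
                    (\<Sum>v\<in>V. real (card (block_of w r n v \<inter> nbr V E v)) / real (deg V E v)))"
proof -
  interpret rr_experiment w n r V E Parts p q K
    using assms by unfold_locales auto
  show ?thesis
    by (intro conjI impI order_trans[OF sqrt_rr_expect_sq_mono sqrt_rr_expect_sq_dev_bound_le]
        sum_wnorm_le_dev_bound abs_xi_le_dev_bound)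
qed

end
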